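(* Let $M$ be a random measure on a Polish space $\mathbb S$ and let $\mathcal I$ be a countable semi-ring of bounded Borel subsets of $\mathbb S$ which generates the Borel $\sigma$-field and is dissecting (every open set is a countable union of sets in $\mathcal I$ and every bounded Borel set is covered by finitely many sets in $\mathcal I$). Then $(M(B_1),\dots,M(B_n))$ is negatively associated for all $n\ge1$ and all pairwise disjoint $B_1,\dots,B_n\in\mathcal I$ if and only if $(M(B_1),\dots,M(B_n))$ is negatively associated for all $n\ge1$ and all pairwise disjoint bounded Borel sets $B_1,\dots,B_n$. The same equivalence holds with "negatively associated" replaced by "positively associated".
   Context: $\mathbb S$ is Polish with a fixed complete metric; bounded sets refer to this metric. A random measure on $\mathbb S$ is a random element of the space of measures on $\mathbb S$ finite on bounded Borel sets (with the $\sigma$-field generated by the evaluations $\mu\mapsto\mu(B)$). A random vector $(Y_1,\dots,Y_n)$ in $\mathbb R^n$ is negatively associated if $\mathbb E[f(Y_J)g(Y_{J^c})]\le\mathbb E[f(Y_J)]\mathbb E[g(Y_{J^c})]$ for all $J\subset\{1,\dots,n\}$ and all bounded measurable coordinatewise non-decreasing $f:\mathbb R^J\to\mathbb R$, $g:\mathbb R^{J^c}\to\mathbb R$; it is positively associated if $\mathbb E[f(Y_J)g(Y_J)]\ge\mathbb E[f(Y_J)]\mathbb E[g(Y_J)]$ for all $J$ and all bounded measurable coordinatewise non-decreasing $f,g:\mathbb R^J\to\mathbb R$. *)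

theory Defs
  imports "HOL-Probability.Probability"
begin

definition coord_mono :: "'i set \<Rightarrow> (('i \<Rightarrow> real) \<Rightarrow> real) \<Rightarrow> bool" where
  "coord_mono J f \<longleftrightarrow>
     (\<forall>x\<in>PiE J (\<lambda>_. UNIV). \<forall>y\<in>PiE J (\<lambda>_. UNIV).
        (\<forall>j\<in>J. x j \<le> y j) \<longrightarrow> f x \<le> f y)"

definition test_fun :: "'i set \<Rightarrow> (('i \<Rightarrow> real) \<Rightarrow> real) \<Rightarrow> bool" where
  "test_fun J f \<longleftrightarrow>
     f \<in> borel_measurable (PiM J (\<lambda>_. borel)) \<and>
     (\<exists>C. \<forall>x\<in>PiE J (\<lambda>_. UNIV). \<bar>f x\<bar> \<le> C) \<and>
     coord_mono J f"

definition neg_assoc :: "'w measure \<Rightarrow> ('i \<Rightarrow> 'w \<Rightarrow> real) \<Rightarrow> 'i set \<Rightarrow> bool" where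
  "neg_assoc P Y I \<longleftrightarrow>
     (\<forall>J\<subseteq>I. \<forall>f g. test_fun J f \<longrightarrow> test_fun (I - J) g \<longrightarrow>
        integral\<^sup>L P (\<lambda>\<omega>. f (restrict (\<lambda>i. Y i \<omega>) J) * g (restrict (\<lambda>i. Y i \<omega>) (I - J)))
        \<le> integral\<^sup>L P (\<lambda>\<omega>. f (restrict (\<lambda>i. Y i \<omega>) J)) *
           integral\<^sup>L P (\<lambda>\<omega>. g (restrict (\<lambda>i. Y i \<omega>) (I - J))))"

definition pos_assoc :: "'w measure \<Rightarrow> ('i \<Rightarrow> 'w \<Rightarrow> real) \<Rightarrow> 'i set \<Rightarrow> bool" where
  "pos_assoc P Y I \<longleftrightarrow>
     (\<forall>J\<subseteq>I. \<forall>f g. test_fun J f \<longrightarrow> test_fun J g \<longrightarrow>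
        integral\<^sup>L P (\<lambda>\<omega>. f (restrict (\<lambda>i. Y i \<omega>) J) * g (restrict (\<lambda>i. Y i \<omega>) J))
        \<ge> integral\<^sup>L P (\<lambda>\<omega>. f (restrict (\<lambda>i. Y i \<omega>) J)) *
           integral\<^sup>L P (\<lambda>\<omega>. g (restrict (\<lambda>i. Y i \<omega>) J)))"

definition random_measure :: "'w measure \<Rightarrow> ('w \<Rightarrow> 'a::metric_space measure) \<Rightarrow> bool" where
  "random_measure P M \<longleftrightarrow>
     (\<forall>\<omega>\<in>space P. sets (M \<omega>) = sets borel) \<and>
     (\<forall>\<omega>\<in>space P. \<forall>B\<in>sets borel. bounded B \<longrightarrow> emeasure (M \<omega>) B < \<infinity>) \<and>
     (\<forall>B\<in>sets borel. (\<lambda>\<omega>. emeasure (M \<omega>) B) \<in> borel_measurable P)"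

definition dissecting :: "'a::metric_space set set \<Rightarrow> bool" where
  "dissecting \<I> \<longleftrightarrow>
     (\<forall>U. open U \<longrightarrow> (\<exists>C\<subseteq>\<I>. countable C \<and> U = \<Union>C)) \<and>
     (\<forall>B\<in>sets borel. bounded B \<longrightarrow> (\<exists>C\<subseteq>\<I>. finite C \<and> B \<subseteq> \<Union>C))"

end

theory Submission
  imports Defs
begin

text \<open>Both properties are inequalities \<open>s \<cdot> Cov(f(Y\<^sub>J), g(Y\<^sub>K)) \<le> 0\<close> over coordinatewise
  non-decreasing bounded test functions. Such functions can be approximated in \<open>L\<^sup>1\<close> of any
  law on \<open>\<real>\<^sup>n\<close> by continuous ones (staircases over up-closed superlevel sets, each set
  approximated from inside by a compact set and smoothed by a Lipschitz bump), and for continuous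
  test functions the inequalities pass to pointwise limits of the random vector.

  Starting from disjoint sets of the semi-ring, finite disjoint unions are handled by grouping:
  monotone functions of group sums are monotone functions of the summands. Then the sets are
  replaced one at a time by arbitrary bounded Borel sets: the sets \<open>B\<close> inside a bounded element
  \<open>E\<close> of the generated ring for which the inequalities survive form a monotone class containing
  the ring, since the masses \<open>M(B)\<close> converge along monotone sequences, and by the monotone class
  theorem they include all Borel subsets of \<open>E\<close>; the dissecting property supplies \<open>E\<close>.\<close>

section \<open>The monotone class theorem\<close>

inductive_set monotone_hull :: "'a set set \<Rightarrow> 'a set set" for G where
  basic: "A \<in> G \<Longrightarrow> A \<in> monotone_hull G"
| incseq_Union: "(\<And>n. A n \<in> monotone_hull G) \<Longrightarrow> (\<And>n. A n \<subseteq> A (Suc n)) \<Longrightarrow>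
    (\<Union>n. A n) \<in> monotone_hull G"
| decseq_Inter: "(\<And>n. A n \<in> monotone_hull G) \<Longrightarrow> (\<And>n. A (Suc n) \<subseteq> A n) \<Longrightarrow>
    (\<Inter>n. A n) \<in> monotone_hull G"

lemma monotone_hull_least:
  assumes "G \<subseteq> C"
    and "\<And>A. (\<And>n. A n \<in> C) \<Longrightarrow> (\<And>n. A n \<subseteq> A (Suc n)) \<Longrightarrow> (\<Union>n. A n) \<in> C"
    and "\<And>A. (\<And>n. A n \<in> C) \<Longrightarrow> (\<And>n. A (Suc n) \<subseteq> A n) \<Longrightarrow> (\<Inter>n. A n) \<in> C"
  shows "monotone_hull G \<subseteq> C"
proof
  fix x assume "x \<in> monotone_hull G"
  then show "x \<in> C" by induct (use assms in auto)
qed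

lemma monotone_hull_Int_left:
  assumes G: "\<And>c. c \<in> G \<Longrightarrow> a \<inter> c \<in> monotone_hull M" and x: "x \<in> monotone_hull G"
  shows "a \<inter> x \<in> monotone_hull M"
proof -
  have "monotone_hull G \<subseteq> {b. a \<inter> b \<in> monotone_hull M}"
  proof (rule monotone_hull_least)
    fix A :: "nat \<Rightarrow> _" assume "\<And>n. A n \<in> {b. a \<inter> b \<in> monotone_hull M}" "\<And>n. A n \<subseteq> A (Suc n)"
    then have "(\<Union>n. a \<inter> A n) \<in> monotone_hull M" by (intro monotone_hull.incseq_Union) auto
    moreover have "(\<Union>n. a \<inter> A n) = a \<inter> (\<Union>n. A n)" by auto
    ultimately show "(\<Union>n. A n) \<in> {b. a \<inter> b \<in> monotone_hull M}" by simp
  next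
    fix A :: "nat \<Rightarrow> _" assume "\<And>n. A n \<in> {b. a \<inter> b \<in> monotone_hull M}" "\<And>n. A (Suc n) \<subseteq> A n"
    then have "(\<Inter>n. a \<inter> A n) \<in> monotone_hull M" by (intro monotone_hull.decseq_Inter) auto
    moreover have "(\<Inter>n. a \<inter> A n) = a \<inter> (\<Inter>n. A n)" by auto
    ultimately show "(\<Inter>n. A n) \<in> {b. a \<inter> b \<in> monotone_hull M}" by simp
  qed (use G in auto)
  with x show ?thesis by auto
qed

context algebra
begin

lemma monotone_hull_subset_space: "x \<in> monotone_hull M \<Longrightarrow> x \<subseteq> \<Omega>"
proof (induct rule: monotone_hull.induct)
  case (decseq_Inter A)
  then show ?case by blast
qed (auto dest: sets_into_space)

lemma monotone_hull_compl:
  assumes "x \<in> monotone_hull M" shows "\<Omega> - x \<in> monotone_hull M"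
proof -
  have "monotone_hull M \<subseteq> {b. \<Omega> - b \<in> monotone_hull M}"
  proof (rule monotone_hull_least)
    fix A :: "nat \<Rightarrow> _" assume "\<And>n. A n \<in> {b. \<Omega> - b \<in> monotone_hull M}" "\<And>n. A n \<subseteq> A (Suc n)"
    then have "(\<Inter>n. \<Omega> - A n) \<in> monotone_hull M" by (intro monotone_hull.decseq_Inter) auto
    moreover have "(\<Inter>n. \<Omega> - A n) = \<Omega> - (\<Union>n. A n)" by auto
    ultimately show "(\<Union>n. A n) \<in> {b. \<Omega> - b \<in> monotone_hull M}" by simp
  next
    fix A :: "nat \<Rightarrow> _" assume "\<And>n. A n \<in> {b. \<Omega> - b \<in> monotone_hull M}" "\<And>n. A (Suc n) \<subseteq> A n"
    then have "(\<Union>n. \<Omega> - A n) \<in> monotone_hull M" by (intro monotone_hull.incseq_Union) auto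
    moreover have "(\<Union>n. \<Omega> - A n) = \<Omega> - (\<Inter>n. A n)" by auto
    ultimately show "(\<Inter>n. A n) \<in> {b. \<Omega> - b \<in> monotone_hull M}" by simp
  qed (auto intro: monotone_hull.basic)
  with assms show ?thesis by auto
qed

lemma monotone_hull_Int:
  assumes "x \<in> monotone_hull M" "y \<in> monotone_hull M" shows "x \<inter> y \<in> monotone_hull M"
proof -
  have "a \<inter> y \<in> monotone_hull M" if "a \<in> M" "y \<in> monotone_hull M" for a y
    by (rule monotone_hull_Int_left[OF _ that(2)]) (use that in \<open>auto intro: monotone_hull.basic\<close>)
  then have "y \<inter> x \<in> monotone_hull M"
    by (intro monotone_hull_Int_left[OF _ assms(1)]) (use assms(2) in \<open>auto simp: Int_commute\<close>)
  then show ?thesis by (simp add: Int_commute)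
qed

lemma monotone_hull_Un:
  assumes "x \<in> monotone_hull M" "y \<in> monotone_hull M" shows "x \<union> y \<in> monotone_hull M"
proof -
  have "\<Omega> - ((\<Omega> - x) \<inter> (\<Omega> - y)) \<in> monotone_hull M"
    using assms by (intro monotone_hull_compl monotone_hull_Int)
  moreover have "\<Omega> - ((\<Omega> - x) \<inter> (\<Omega> - y)) = x \<union> y"
    using assms monotone_hull_subset_space by auto
  ultimately show ?thesis by simp
qed

lemma sigma_sets_subset_monotone_hull: "sigma_sets \<Omega> M \<subseteq> monotone_hull M"
proof
  fix x assume "x \<in> sigma_sets \<Omega> M"
  then show "x \<in> monotone_hull M"
  proof induct
    case (Union A)
    have "(\<Union>i<n. A i) \<in> monotone_hull M" for n
      by (induct n) (auto simp: lessThan_Suc intro: monotone_hull.basic monotone_hull_Un Union)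
    then have "(\<Union>n. \<Union>i<n. A i) \<in> monotone_hull M"
      by (rule monotone_hull.incseq_Union) (auto simp: lessThan_Suc)
    moreover have "(\<Union>n. \<Union>i<n. A i) = (\<Union>i. A i)" by auto
    ultimately show ?case by simp
  qed (auto intro: monotone_hull.basic monotone_hull_compl)
qed

theorem monotone_class:
  assumes "M \<subseteq> C"
    and "\<And>A. (\<And>n. A n \<in> C) \<Longrightarrow> (\<And>n. A n \<subseteq> A (Suc n)) \<Longrightarrow> (\<Union>n. A n) \<in> C"
    and "\<And>A. (\<And>n. A n \<in> C) \<Longrightarrow> (\<And>n. A (Suc n) \<subseteq> A n) \<Longrightarrow> (\<Inter>n. A n) \<in> C"
  shows "sigma_sets \<Omega> M \<subseteq> C"
  using sigma_sets_subset_monotone_hull monotone_hull_least[OF assms] by blast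

end

section \<open>Covariance inequalities for monotone test functions\<close>

definition cont_test_fun :: "'i set \<Rightarrow> (('i \<Rightarrow> real) \<Rightarrow> real) \<Rightarrow> bool" where
  "cont_test_fun J f \<longleftrightarrow> test_fun J f \<and>
     (\<forall>xs x. (\<forall>j\<in>J. (\<lambda>k. xs k j) \<longlonglongrightarrow> x j) \<longrightarrow> (\<lambda>k. f (restrict (xs k) J)) \<longlonglongrightarrow> f (restrict x J))"

text \<open>With \<open>s = 1\<close> this says that \<open>f(Y\<^sub>J\<^sub>1)\<close> and \<open>g(Y\<^sub>J\<^sub>2)\<close> are non-positively correlated,
  with \<open>s = -1\<close> that they are non-negatively correlated, for all test functions of the class \<open>T\<close>.\<close>

definition cov_ineq :: "'w measure \<Rightarrow> ('i \<Rightarrow> 'w \<Rightarrow> real) \<Rightarrow> 'i set \<Rightarrow> 'i set \<Rightarrow> real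
    \<Rightarrow> ('i set \<Rightarrow> (('i \<Rightarrow> real) \<Rightarrow> real) \<Rightarrow> bool) \<Rightarrow> bool" where
  "cov_ineq P Y J1 J2 s T \<longleftrightarrow> (\<forall>f g. T J1 f \<longrightarrow> T J2 g \<longrightarrow>
     s * integral\<^sup>L P (\<lambda>\<omega>. f (restrict (\<lambda>i. Y i \<omega>) J1) * g (restrict (\<lambda>i. Y i \<omega>) J2))
     \<le> s * (integral\<^sup>L P (\<lambda>\<omega>. f (restrict (\<lambda>i. Y i \<omega>) J1)) *
           integral\<^sup>L P (\<lambda>\<omega>. g (restrict (\<lambda>i. Y i \<omega>) J2))))"

definition assoc_ineq :: "'w measure \<Rightarrow> (nat \<Rightarrow> 'w \<Rightarrow> real) \<Rightarrow> nat
    \<Rightarrow> (nat set \<Rightarrow> ((nat \<Rightarrow> real) \<Rightarrow> real) \<Rightarrow> bool) \<Rightarrow> bool \<Rightarrow> bool" where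
  "assoc_ineq P Y n T negative \<longleftrightarrow> (\<forall>J\<subseteq>{..<n}.
     cov_ineq P Y J (if negative then {..<n} - J else J) (if negative then 1 else -1) T)"

lemma neg_assoc_iff_assoc_ineq: "neg_assoc P Y {..<n} \<longleftrightarrow> assoc_ineq P Y n test_fun True"
  unfolding assoc_ineq_def cov_ineq_def neg_assoc_def by simp

lemma pos_assoc_iff_assoc_ineq: "pos_assoc P Y {..<n} \<longleftrightarrow> assoc_ineq P Y n test_fun False"
  unfolding assoc_ineq_def cov_ineq_def pos_assoc_def by simp

lemma cont_test_fun_imp_test_fun: "cont_test_fun J f \<Longrightarrow> test_fun J f"
  by (simp add: cont_test_fun_def)

lemma assoc_ineq_cont_test_fun:
  "assoc_ineq P Y n test_fun b \<Longrightarrow> assoc_ineq P Y n cont_test_fun b"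
  unfolding assoc_ineq_def cov_ineq_def using cont_test_fun_imp_test_fun by blast

lemma assoc_ineq_cong:
  assumes "\<And>i \<omega>. i < n \<Longrightarrow> \<omega> \<in> space P \<Longrightarrow> Y i \<omega> = Y' i \<omega>"
  shows "assoc_ineq P Y n T b \<longleftrightarrow> assoc_ineq P Y' n T b"
proof -
  have "restrict (\<lambda>i. Y i \<omega>) K = restrict (\<lambda>i. Y' i \<omega>) K"
    if "K \<subseteq> {..<n}" "\<omega> \<in> space P" for K \<omega>
    using that assms by (intro restrict_ext) auto
  then have "cov_ineq P Y J K s T \<longleftrightarrow> cov_ineq P Y' J K s T"
    if "J \<subseteq> {..<n}" "K \<subseteq> {..<n}" for J K s
    unfolding cov_ineq_def using that by (simp cong: Bochner_Integration.integral_cong)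
  then show ?thesis unfolding assoc_ineq_def by (auto split: if_splits)
qed

lemma measurable_restrict_family[measurable]:
  assumes "\<And>i. i \<in> J \<Longrightarrow> Y i \<in> borel_measurable P"
  shows "(\<lambda>\<omega>. restrict (\<lambda>i. Y i \<omega>) J) \<in> measurable P (PiM J (\<lambda>_. borel))"
  using assms by (intro measurable_restrict) auto

lemma test_fun_measurable_comp:
  assumes "test_fun J f" "\<And>i. i \<in> J \<Longrightarrow> Y i \<in> borel_measurable P"
  shows "(\<lambda>\<omega>. f (restrict (\<lambda>i. Y i \<omega>) J)) \<in> borel_measurable P"
  using assms(1) unfolding test_fun_def
  by (intro measurable_compose[OF measurable_restrict_family[OF assms(2)]]) auto

lemma test_fun_boundE:
  assumes "test_fun J f"
  obtains C where "\<And>x. \<bar>f (restrict x J)\<bar> \<le> C" "C \<ge> 0"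
proof -
  from assms obtain C where C: "\<forall>x\<in>PiE J (\<lambda>_. UNIV). \<bar>f x\<bar> \<le> C" unfolding test_fun_def by blast
  have "\<bar>f (restrict x J)\<bar> \<le> C" for x using C by auto
  moreover have "C \<ge> 0" using C[rule_format, of "restrict (\<lambda>_. 0) J"] by auto
  ultimately show ?thesis using that by blast
qed

lemma (in prob_space) integral_bounded_convergence:
  fixes f :: "nat \<Rightarrow> 'a \<Rightarrow> real"
  assumes "\<And>k. f k \<in> borel_measurable M" "g \<in> borel_measurable M"
    and "\<And>k x. x \<in> space M \<Longrightarrow> \<bar>f k x\<bar> \<le> C"
    and "\<And>x. x \<in> space M \<Longrightarrow> (\<lambda>k. f k x) \<longlonglongrightarrow> g x"
  shows "(\<lambda>k. integral\<^sup>L M (f k)) \<longlonglongrightarrow> integral\<^sup>L M g"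
  by (rule integral_dominated_convergence[where w="\<lambda>_. C"]) (use assms in auto)

lemma cov_ineq_limit:
  assumes P: "prob_space P"
    and Yk: "\<And>k i. i \<in> J1 \<union> J2 \<Longrightarrow> Yk k i \<in> borel_measurable P"
    and Y: "\<And>i. i \<in> J1 \<union> J2 \<Longrightarrow> Y i \<in> borel_measurable P"
    and lim: "\<And>\<omega> i. \<omega> \<in> space P \<Longrightarrow> i \<in> J1 \<union> J2 \<Longrightarrow> (\<lambda>k. Yk k i \<omega>) \<longlonglongrightarrow> Y i \<omega>"
    and ineq: "\<And>k. cov_ineq P (Yk k) J1 J2 s cont_test_fun"
  shows "cov_ineq P Y J1 J2 s cont_test_fun"
  unfolding cov_ineq_def
proof (intro allI impI)
  interpret prob_space P by fact
  fix f g assume f: "cont_test_fun J1 f" and g: "cont_test_fun J2 g"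
  define F where "F k \<omega> = f (restrict (\<lambda>i. Yk k i \<omega>) J1)" for k \<omega>
  define G where "G k \<omega> = g (restrict (\<lambda>i. Yk k i \<omega>) J2)" for k \<omega>
  define F_lim where "F_lim \<omega> = f (restrict (\<lambda>i. Y i \<omega>) J1)" for \<omega>
  define G_lim where "G_lim \<omega> = g (restrict (\<lambda>i. Y i \<omega>) J2)" for \<omega>
  have tf: "test_fun J1 f" and tg: "test_fun J2 g"
    using f g by (auto simp: cont_test_fun_def)
  obtain Cf where Cf: "\<And>x. \<bar>f (restrict x J1)\<bar> \<le> Cf" "Cf \<ge> 0" using test_fun_boundE[OF tf] by blast
  obtain Cg where Cg: "\<And>x. \<bar>g (restrict x J2)\<bar> \<le> Cg" "Cg \<ge> 0" using test_fun_boundE[OF tg] by blast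
  have meas: "F k \<in> borel_measurable P" "G k \<in> borel_measurable P"
    "F_lim \<in> borel_measurable P" "G_lim \<in> borel_measurable P" for k
    unfolding F_def G_def F_lim_def G_lim_def
    by (intro test_fun_measurable_comp[OF tf] test_fun_measurable_comp[OF tg]; use Yk Y in auto)+
  have conv: "(\<lambda>k. F k \<omega>) \<longlonglongrightarrow> F_lim \<omega>" "(\<lambda>k. G k \<omega>) \<longlonglongrightarrow> G_lim \<omega>" if "\<omega> \<in> space P" for \<omega>
    using f g lim[OF that] unfolding cont_test_fun_def F_def G_def F_lim_def G_lim_def by auto
  have bound: "\<bar>F k \<omega>\<bar> \<le> Cf" "\<bar>G k \<omega>\<bar> \<le> Cg" for k \<omega>
    unfolding F_def G_def using Cf Cg by auto
  have lim_F: "(\<lambda>k. integral\<^sup>L P (F k)) \<longlonglongrightarrow> integral\<^sup>L P F_lim"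
    by (rule integral_bounded_convergence[where C=Cf]) (use meas conv bound in auto)
  have lim_G: "(\<lambda>k. integral\<^sup>L P (G k)) \<longlonglongrightarrow> integral\<^sup>L P G_lim"
    by (rule integral_bounded_convergence[where C=Cg]) (use meas conv bound in auto)
  have lim_FG: "(\<lambda>k. integral\<^sup>L P (\<lambda>\<omega>. F k \<omega> * G k \<omega>)) \<longlonglongrightarrow> integral\<^sup>L P (\<lambda>\<omega>. F_lim \<omega> * G_lim \<omega>)"
    by (rule integral_bounded_convergence[where C="Cf * Cg"])
      (use meas conv bound Cf in \<open>auto simp: abs_mult intro!: mult_mono tendsto_mult\<close>)
  have "s * integral\<^sup>L P (\<lambda>\<omega>. F k \<omega> * G k \<omega>) \<le> s * (integral\<^sup>L P (F k) * integral\<^sup>L P (G k))"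
    for k using ineq f g unfolding cov_ineq_def F_def G_def by blast
  then have "s * integral\<^sup>L P (\<lambda>\<omega>. F_lim \<omega> * G_lim \<omega>) \<le> s * (integral\<^sup>L P F_lim * integral\<^sup>L P G_lim)"
    by (intro LIMSEQ_le[OF tendsto_mult[OF tendsto_const lim_FG]
          tendsto_mult[OF tendsto_const tendsto_mult[OF lim_F lim_G]]]) auto
  then show "s * integral\<^sup>L P (\<lambda>\<omega>. f (restrict (\<lambda>i. Y i \<omega>) J1) * g (restrict (\<lambda>i. Y i \<omega>) J2))
      \<le> s * (integral\<^sup>L P (\<lambda>\<omega>. f (restrict (\<lambda>i. Y i \<omega>) J1)) *
             integral\<^sup>L P (\<lambda>\<omega>. g (restrict (\<lambda>i. Y i \<omega>) J2)))"
    unfolding F_lim_def G_lim_def .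
qed

lemma assoc_ineq_limit:
  assumes P: "prob_space P"
    and Yk: "\<And>k i. i < n \<Longrightarrow> Yk k i \<in> borel_measurable P"
    and Y: "\<And>i. i < n \<Longrightarrow> Y i \<in> borel_measurable P"
    and lim: "\<And>\<omega> i. \<omega> \<in> space P \<Longrightarrow> i < n \<Longrightarrow> (\<lambda>k. Yk k i \<omega>) \<longlonglongrightarrow> Y i \<omega>"
    and ineq: "\<And>k. assoc_ineq P (Yk k) n cont_test_fun b"
  shows "assoc_ineq P Y n cont_test_fun b"
  unfolding assoc_ineq_def
proof (intro allI impI)
  fix J assume J: "J \<subseteq> {..<n}"
  have sub: "i < n" if "i \<in> J \<union> (if b then {..<n} - J else J)" for i
    using that J by (auto split: if_splits)
  show "cov_ineq P Y J (if b then {..<n} - J else J) (if b then 1 else -1) cont_test_fun"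
    by (rule cov_ineq_limit[OF P, where Yk=Yk])
      (use sub Yk Y lim ineq J in \<open>auto simp: assoc_ineq_def\<close>)
qed

section \<open>Continuous monotone approximations of monotone test functions\<close>

text \<open>\<open>orthant_dist J k y\<close> is the \<open>\<ell>\<^sup>1\<close>-distance, in the coordinates \<open>J\<close>, from \<open>y\<close> to the upper
  orthant of \<open>k\<close>; \<open>upset_dist J K\<close> is the distance to the up-closure of \<open>K\<close>.\<close>

definition orthant_dist :: "'i set \<Rightarrow> ('i \<Rightarrow> real) \<Rightarrow> ('i \<Rightarrow> real) \<Rightarrow> real" where
  "orthant_dist J k y = (\<Sum>j\<in>J. max 0 (k j - y j))"

definition upset_dist :: "'i set \<Rightarrow> ('i \<Rightarrow> real) set \<Rightarrow> ('i \<Rightarrow> real) \<Rightarrow> real" where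
  "upset_dist J K y = (INF k\<in>K. orthant_dist J k y)"

definition upset_bump :: "'i set \<Rightarrow> ('i \<Rightarrow> real) set \<Rightarrow> nat \<Rightarrow> ('i \<Rightarrow> real) \<Rightarrow> real" where
  "upset_bump J K m y = max 0 (1 - real m * upset_dist J K y)"

lemma orthant_dist_nonneg: "0 \<le> orthant_dist J k y"
  unfolding orthant_dist_def by (intro sum_nonneg) auto

lemma orthant_dist_lipschitz: "\<bar>orthant_dist J k y - orthant_dist J k z\<bar> \<le> (\<Sum>j\<in>J. \<bar>y j - z j\<bar>)"
proof -
  have "\<bar>orthant_dist J k y - orthant_dist J k z\<bar>
      \<le> (\<Sum>j\<in>J. \<bar>max 0 (k j - y j) - max 0 (k j - z j)\<bar>)"
    unfolding orthant_dist_def sum_subtractf[symmetric] by (rule sum_abs)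
  also have "\<dots> \<le> (\<Sum>j\<in>J. \<bar>y j - z j\<bar>)" by (intro sum_mono) linarith
  finally show ?thesis .
qed

lemma orthant_dist_antimono:
  "(\<And>j. j \<in> J \<Longrightarrow> y j \<le> z j) \<Longrightarrow> orthant_dist J k z \<le> orthant_dist J k y"
  unfolding orthant_dist_def by (intro sum_mono) (metis diff_left_mono max.mono order_refl)

lemma orthant_dist_eq_0_iff: "finite J \<Longrightarrow> orthant_dist J k y = 0 \<longleftrightarrow> (\<forall>j\<in>J. k j \<le> y j)"
  unfolding orthant_dist_def by (subst sum_nonneg_eq_0_iff) auto

lemma orthant_dist_restrict: "orthant_dist J k (restrict y J) = orthant_dist J k y"
  unfolding orthant_dist_def by (intro sum.cong) auto

lemma orthant_dist_self: "orthant_dist J k k = 0"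
  unfolding orthant_dist_def by simp

lemma continuous_on_orthant_dist: "continuous_on UNIV (\<lambda>k. orthant_dist J k y)"
  unfolding orthant_dist_def by (intro continuous_intros continuous_on_product_coordinates)

lemma bdd_below_orthant_dist: "bdd_below ((\<lambda>k. orthant_dist J k y) ` K)"
  by (rule bdd_belowI[of _ 0]) (auto simp: orthant_dist_nonneg)

lemma upset_dist_le: "k \<in> K \<Longrightarrow> upset_dist J K y \<le> orthant_dist J k y"
  unfolding upset_dist_def by (rule cINF_lower[OF bdd_below_orthant_dist])

lemma upset_dist_nonneg: "K \<noteq> {} \<Longrightarrow> 0 \<le> upset_dist J K y"
  unfolding upset_dist_def by (rule cINF_greatest) (auto simp: orthant_dist_nonneg)

lemma upset_dist_eq_0: "k \<in> K \<Longrightarrow> upset_dist J K k = 0"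
  using upset_dist_le[of k K J k] upset_dist_nonneg[of K J k] by (auto simp: orthant_dist_self)

lemma upset_dist_lipschitz:
  assumes "K \<noteq> {}"
  shows "\<bar>upset_dist J K y - upset_dist J K z\<bar> \<le> (\<Sum>j\<in>J. \<bar>y j - z j\<bar>)"
proof -
  have half: "upset_dist J K y \<le> upset_dist J K z + (\<Sum>j\<in>J. \<bar>y j - z j\<bar>)" for y z
  proof -
    have "upset_dist J K y - (\<Sum>j\<in>J. \<bar>y j - z j\<bar>) \<le> orthant_dist J k z" if "k \<in> K" for k
      using upset_dist_le[OF that, of J y] orthant_dist_lipschitz[of J k y z] by linarith
    then have "upset_dist J K y - (\<Sum>j\<in>J. \<bar>y j - z j\<bar>) \<le> upset_dist J K z"
      unfolding upset_dist_def[of J K z] using assms by (intro cINF_greatest) auto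
    then show ?thesis by linarith
  qed
  have "(\<Sum>j\<in>J. \<bar>z j - y j\<bar>) = (\<Sum>j\<in>J. \<bar>y j - z j\<bar>)"
    by (simp add: abs_minus_commute)
  with half[of y z] half[of z y] show ?thesis by linarith
qed

lemma upset_dist_antimono:
  "K \<noteq> {} \<Longrightarrow> (\<And>j. j \<in> J \<Longrightarrow> y j \<le> z j) \<Longrightarrow> upset_dist J K z \<le> upset_dist J K y"
  unfolding upset_dist_def
  by (rule cINF_mono[OF _ bdd_below_orthant_dist]) (auto intro!: bexI orthant_dist_antimono)

lemma upset_dist_restrict: "upset_dist J K (restrict y J) = upset_dist J K y"
  unfolding upset_dist_def orthant_dist_restrict ..

lemma upset_dist_tendsto:
  fixes X :: "'a \<Rightarrow> 'i \<Rightarrow> real"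
  assumes K: "K \<noteq> {}" and lim: "\<And>j. j \<in> J \<Longrightarrow> ((\<lambda>t. X t j) \<longlongrightarrow> x j) F"
  shows "((\<lambda>t. upset_dist J K (X t)) \<longlongrightarrow> upset_dist J K x) F"
proof -
  have "((\<lambda>t. \<Sum>j\<in>J. \<bar>X t j - x j\<bar>) \<longlongrightarrow> (\<Sum>j\<in>J. \<bar>x j - x j\<bar>)) F"
    by (intro tendsto_sum tendsto_rabs tendsto_diff lim tendsto_const)
  then have null: "((\<lambda>t. \<Sum>j\<in>J. \<bar>X t j - x j\<bar>) \<longlongrightarrow> 0) F" by simp
  have "\<forall>\<^sub>F t in F. norm (upset_dist J K (X t) - upset_dist J K x) \<le> (\<Sum>j\<in>J. \<bar>X t j - x j\<bar>)"
    using upset_dist_lipschitz[OF K] by auto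
  from Lim_null_comparison[OF this null] show ?thesis by (rule LIM_zero_cancel)
qed

lemma continuous_on_upset_dist:
  assumes "K \<noteq> {}" shows "continuous_on UNIV (upset_dist J K)"
  unfolding continuous_on_def
  by (intro ballI upset_dist_tendsto[OF assms] tendsto_intros continuous_on_product_coordinates
      [unfolded continuous_on_def, rule_format, simplified])

lemma upset_dist_measurable:
  fixes K :: "(nat \<Rightarrow> real) set"
  assumes K: "K \<noteq> {}"
  shows "upset_dist J K \<in> borel_measurable (PiM J (\<lambda>_. borel))"
proof -
  let ?e = "\<lambda>y::nat \<Rightarrow> real. \<lambda>i\<in>UNIV. if i \<in> J then y i else 0"
  have "?e \<in> measurable (PiM J (\<lambda>_. borel)) (PiM UNIV (\<lambda>_. borel))"
  proof (intro measurable_restrict)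
    fix i show "(\<lambda>x. if i \<in> J then x i else 0) \<in> borel_measurable (PiM J (\<lambda>_. borel))"
      by (cases "i \<in> J") auto
  qed
  then have "?e \<in> measurable (PiM J (\<lambda>_. borel)) borel"
    by (simp add: measurable_cong_sets[OF refl sets_PiM_equal_borel])
  then have "(\<lambda>y. upset_dist J K (?e y)) \<in> borel_measurable (PiM J (\<lambda>_. borel))"
    by (rule measurable_compose[OF _ borel_measurable_continuous_onI[OF continuous_on_upset_dist[OF K]]])
  moreover have "upset_dist J K (?e y) = upset_dist J K y" for y
    unfolding upset_dist_def orthant_dist_def by (intro INF_cong sum.cong) auto
  ultimately show ?thesis by simp
qed

lemma upset_dist_eq_0_imp_above:
  assumes K: "compact K" "K \<noteq> {}" and J: "finite J" and "upset_dist J K y = 0"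
  shows "\<exists>k\<in>K. \<forall>j\<in>J. k j \<le> y j"
proof -
  obtain k where k: "k \<in> K" "\<And>k'. k' \<in> K \<Longrightarrow> orthant_dist J k y \<le> orthant_dist J k' y"
    using continuous_attains_inf[OF K continuous_on_subset[OF continuous_on_orthant_dist subset_UNIV]]
    by blast
  have "orthant_dist J k y \<le> upset_dist J K y"
    unfolding upset_dist_def by (rule cINF_greatest[OF K(2)]) (use k in auto)
  then have "orthant_dist J k y = 0" using assms(4) orthant_dist_nonneg[of J k y] by linarith
  then show ?thesis using k(1) orthant_dist_eq_0_iff[OF J] by blast
qed

lemma upset_bump_nonneg: "0 \<le> upset_bump J K m y"
  and upset_bump_le_1: "K \<noteq> {} \<Longrightarrow> upset_bump J K m y \<le> 1"
  unfolding upset_bump_def using upset_dist_nonneg[of K J y] by auto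

lemma upset_bump_restrict: "upset_bump J K m (restrict y J) = upset_bump J K m y"
  unfolding upset_bump_def upset_dist_restrict ..

lemma upset_bump_eq_1: "k \<in> K \<Longrightarrow> upset_bump J K m k = 1"
  unfolding upset_bump_def by (simp add: upset_dist_eq_0)

lemma upset_bump_measurable:
  fixes K :: "(nat \<Rightarrow> real) set"
  assumes "K \<noteq> {}" shows "upset_bump J K m \<in> borel_measurable borel"
  using borel_measurable_continuous_onI[OF continuous_on_upset_dist[OF assms]]
  unfolding upset_bump_def by measurable

lemma cont_test_fun_upset_bump:
  fixes K :: "(nat \<Rightarrow> real) set"
  assumes K: "K \<noteq> {}"
  shows "cont_test_fun J (upset_bump J K m)"
  unfolding cont_test_fun_def test_fun_def coord_mono_def
proof (intro conjI allI impI ballI)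
  show "upset_bump J K m \<in> borel_measurable (PiM J (\<lambda>_. borel))"
    unfolding upset_bump_def using upset_dist_measurable[OF K] by measurable
  show "\<exists>C. \<forall>x\<in>PiE J (\<lambda>_. UNIV). \<bar>upset_bump J K m x\<bar> \<le> C"
    by (intro exI[of _ 1]) (simp add: abs_of_nonneg upset_bump_nonneg upset_bump_le_1[OF K])
  fix x y :: "nat \<Rightarrow> real" assume "\<forall>j\<in>J. x j \<le> y j"
  then have "real m * upset_dist J K y \<le> real m * upset_dist J K x"
    by (intro mult_left_mono upset_dist_antimono[OF K]) auto
  then show "upset_bump J K m x \<le> upset_bump J K m y" unfolding upset_bump_def by linarith
next
  fix xs :: "nat \<Rightarrow> nat \<Rightarrow> real" and x
  assume "\<forall>j\<in>J. (\<lambda>k. xs k j) \<longlonglongrightarrow> x j"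
  then have "(\<lambda>k. upset_dist J K (xs k)) \<longlonglongrightarrow> upset_dist J K x"
    by (intro upset_dist_tendsto[OF K]) auto
  then show "(\<lambda>k. upset_bump J K m (restrict (xs k) J)) \<longlonglongrightarrow> upset_bump J K m (restrict x J)"
    unfolding upset_bump_restrict unfolding upset_bump_def by (intro tendsto_intros)
qed

text \<open>Outside an up-closed set \<open>S \<supseteq> K\<close> the distance to the up-closure of the compact set
  \<open>K\<close> is positive, so the bumps eventually vanish there.\<close>

lemma upset_bump_eventually_0:
  fixes K :: "(nat \<Rightarrow> real) set"
  assumes K: "compact K" "K \<noteq> {}" "K \<subseteq> S" and J: "finite J"
    and up: "\<And>x y. x \<in> S \<Longrightarrow> (\<And>j. j \<in> J \<Longrightarrow> x j \<le> y j) \<Longrightarrow> y \<in> S"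
    and "y \<notin> S"
  shows "eventually (\<lambda>m. upset_bump J K m y = 0) sequentially"
proof -
  have "upset_dist J K y \<noteq> 0"
    using upset_dist_eq_0_imp_above[OF K(1,2) J] up K(3) \<open>y \<notin> S\<close> by blast
  then have pos: "0 < upset_dist J K y" using upset_dist_nonneg[OF K(2), of J y] by linarith
  obtain N :: nat where N: "1 / upset_dist J K y < N" using reals_Archimedean2 by blast
  have big: "1 < real m * upset_dist J K y" if "m \<ge> N" for m
  proof -
    have "1 < real N * upset_dist J K y" using N pos by (simp add: field_simps)
    also have "\<dots> \<le> real m * upset_dist J K y" using that pos by (intro mult_right_mono) auto
    finally show ?thesis .
  qed
  then show ?thesis
    unfolding eventually_sequentially upset_bump_def by (intro exI[of _ N]) (force simp: max_def)
qed

lemma finite_measure_inner_compact: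
  fixes \<mu> :: "'a::{second_countable_topology, complete_space} measure"
  assumes "finite_measure \<mu>" and sets: "sets \<mu> = sets borel" and S: "S \<in> sets borel" and "\<epsilon> > 0"
  obtains K where "K \<subseteq> S" "compact K" "measure \<mu> (S - K) \<le> \<epsilon>"
proof -
  interpret finite_measure \<mu> by fact
  have S\<mu>: "S \<in> sets \<mu>" using S sets by simp
  obtain K where K: "K \<subseteq> S" "compact K" "measure \<mu> S \<le> measure \<mu> K + \<epsilon>"
  proof (cases "measure \<mu> S \<le> \<epsilon>")
    case True then show ?thesis using that[of "{}"] by auto
  next
    case False
    then have "ennreal (measure \<mu> S - \<epsilon>) < emeasure \<mu> S"
      using \<open>\<epsilon> > 0\<close> by (simp add: emeasure_eq_measure ennreal_lessI)
    also have "emeasure \<mu> S = (SUP K \<in> {K. K \<subseteq> S \<and> compact K}. emeasure \<mu> K)"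
      by (rule inner_regular[OF sets _ S]) simp
    finally obtain K where "K \<subseteq> S" "compact K" "ennreal (measure \<mu> S - \<epsilon>) < emeasure \<mu> K"
      unfolding less_SUP_iff by blast
    moreover have "measure \<mu> S - \<epsilon> < measure \<mu> K"
      using calculation(3) by (metis emeasure_eq_measure ennreal_leI linorder_not_le)
    ultimately show ?thesis using that[of K] by auto
  qed
  have "K \<in> sets \<mu>" using K(2) sets by (simp add: compact_imp_closed borel_closed)
  then have "measure \<mu> (S - K) = measure \<mu> S - measure \<mu> K"
    using finite_measure_Diff[OF S\<mu> _ K(1)] by simp
  with K that show ?thesis by auto
qed

lemma measurable_sets_borel_cong:
  "sets \<mu> = sets borel \<Longrightarrow> g \<in> borel_measurable borel \<Longrightarrow> g \<in> borel_measurable \<mu>"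
  using measurable_cong_sets[of \<mu> borel borel borel] by simp

lemma measurable_restrict_borel:
  "(\<lambda>x::nat \<Rightarrow> real. restrict x J) \<in> measurable borel (PiM J (\<lambda>_. borel))"
proof -
  have "(\<lambda>x::nat \<Rightarrow> real. \<lambda>i\<in>J. x i) \<in> measurable (PiM UNIV (\<lambda>_. borel)) (PiM J (\<lambda>_. borel))"
    by (intro measurable_restrict) simp
  then show ?thesis by (simp add: measurable_cong_sets[OF sets_PiM_equal_borel refl])
qed

lemma test_fun_borel_measurable:
  "test_fun J f \<Longrightarrow> (\<lambda>x::nat \<Rightarrow> real. f (restrict x J)) \<in> borel_measurable borel"
  unfolding test_fun_def by (intro measurable_compose[OF measurable_restrict_borel]) auto

lemma cont_test_fun_const: "cont_test_fun J (\<lambda>_. c)"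
  unfolding cont_test_fun_def test_fun_def coord_mono_def by auto

text \<open>Inner regularity approximates an up-closed set \<open>S\<close> from inside by a compact \<open>K\<close>;
  the bumps of \<open>K\<close> are \<open>1\<close> on \<open>K\<close> and tend to \<open>0\<close> off \<open>S\<close>.\<close>

lemma upset_indicator_approx:
  fixes \<mu> :: "(nat \<Rightarrow> real) measure"
  assumes "prob_space \<mu>" and sets: "sets \<mu> = sets borel" and J: "finite J"
    and S: "S \<in> sets borel" and up: "\<And>x y. x \<in> S \<Longrightarrow> (\<And>j. j \<in> J \<Longrightarrow> x j \<le> y j) \<Longrightarrow> y \<in> S"
    and e: "\<epsilon> > 0"
  obtains h where "cont_test_fun J h" "\<And>x. 0 \<le> h (restrict x J)" "\<And>x. h (restrict x J) \<le> 1"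
    "integral\<^sup>L \<mu> (\<lambda>x. \<bar>indicator S x - h (restrict x J)\<bar>) \<le> \<epsilon>"
proof -
  interpret prob_space \<mu> by fact
  have space: "space \<mu> = UNIV" using sets_eq_imp_space_eq[OF sets] by simp
  have S\<mu>: "S \<in> sets \<mu>" and NS\<mu>: "- S \<in> sets \<mu>"
    using S sets sets.compl_sets[of S \<mu>] space by (auto simp: Compl_eq_Diff_UNIV)
  obtain K where K: "K \<subseteq> S" "compact K" "measure \<mu> (S - K) \<le> \<epsilon> / 2"
    using finite_measure_inner_compact[OF finite_measure_axioms sets S, of "\<epsilon> / 2"] e by auto
  then have K\<mu>: "K \<in> sets \<mu>" using sets by (simp add: compact_imp_closed borel_closed)
  show ?thesis
  proof (cases "K = {}")
    case True
    then have "integral\<^sup>L \<mu> (\<lambda>x. \<bar>indicator S x - (0::real)\<bar>) \<le> \<epsilon>"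
      using K(3) e space by simp
    then show ?thesis by (intro that[of "\<lambda>_. 0"] cont_test_fun_const) auto
  next
    case False
    define b where "b m x = indicator (- S) x * upset_bump J K m x" for m x
    have bump_bounds: "0 \<le> upset_bump J K m x" "upset_bump J K m x \<le> 1" for m x
      using upset_bump_nonneg upset_bump_le_1[OF False] by auto
    have bump_meas: "upset_bump J K m \<in> borel_measurable \<mu>" for m
      using measurable_sets_borel_cong[OF sets upset_bump_measurable[OF False]] .
    have b_bounds: "0 \<le> b m x" "b m x \<le> 1" for m x
      using bump_bounds[of m x] by (auto simp: b_def indicator_def)
    have b_meas: "b m \<in> borel_measurable \<mu>" for m
      unfolding b_def using bump_meas NS\<mu> by measurable
    have "(\<lambda>m. b m x) \<longlonglongrightarrow> 0" for x
    proof (cases "x \<in> S")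
      case False
      then show ?thesis unfolding b_def
        using upset_bump_eventually_0[OF K(2) \<open>K \<noteq> {}\<close> K(1) J up] 
        by (intro tendsto_eventually) (auto elim: eventually_mono)
    qed (simp add: b_def)
    then have "(\<lambda>m. integral\<^sup>L \<mu> (b m)) \<longlonglongrightarrow> integral\<^sup>L \<mu> (\<lambda>_. 0)"
      by (intro integral_bounded_convergence[where C=1]) (use b_meas b_bounds in auto)
    then have "eventually (\<lambda>m. integral\<^sup>L \<mu> (b m) < \<epsilon> / 2) sequentially"
      using e by (intro order_tendstoD(2)) auto
    then obtain m where m: "integral\<^sup>L \<mu> (b m) < \<epsilon> / 2"
      using eventually_sequentially by auto
    have pointwise: "\<bar>indicator S x - upset_bump J K m x\<bar> \<le> indicator (S - K) x + b m x" for x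
      using bump_bounds[of m x] upset_bump_eq_1[of x K J m] K(1)
      by (cases "x \<in> K"; cases "x \<in> S") (auto simp: b_def indicator_def)
    have "integral\<^sup>L \<mu> (\<lambda>x. \<bar>indicator S x - upset_bump J K m (restrict x J)\<bar>)
        \<le> integral\<^sup>L \<mu> (\<lambda>x. indicator (S - K) x + b m x)"
      unfolding upset_bump_restrict using S\<mu> K\<mu> bump_meas b_meas bump_bounds
      by (intro integral_mono pointwise integrable_const_bound[where B=2] AE_I2
          Bochner_Integration.integrable_add integrable_const_bound[where B=1])
        (auto simp: b_def indicator_def)
    also have "\<dots> = measure \<mu> (S - K) + integral\<^sup>L \<mu> (b m)"
      using S\<mu> K\<mu> b_meas b_bounds
      by (subst Bochner_Integration.integral_add) (auto intro!: integrable_const_bound[where B=1] AE_I2)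
    also have "\<dots> \<le> \<epsilon>" using K(3) m by simp
    finally show ?thesis
      using that cont_test_fun_upset_bump[OF False] bump_bounds by blast
  qed
qed

lemma (in finite_measure) integrable_bounded:
  fixes f :: "'a \<Rightarrow> real"
  shows "f \<in> borel_measurable M \<Longrightarrow> (\<And>x. \<bar>f x\<bar> \<le> B) \<Longrightarrow> integrable M f"
  by (rule integrable_const_bound[where B=B]) auto

lemma staircase_approx:
  fixes v C \<delta> :: real and N :: nat
  assumes N: "N > 0" and v: "-C \<le> v" "v \<le> C" and \<delta>: "\<delta> = 2 * C / N"
  shows "\<bar>v - (-C + \<delta> * (\<Sum>k\<in>{1..N}. if -C + real k * \<delta> < v then 1 else 0))\<bar> \<le> \<delta>"
proof (cases "C = 0")
  case True then show ?thesis using v \<delta> by simp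
next
  case False
  then have \<delta>_pos: "\<delta> > 0" using v \<delta> N by simp
  define q where "q = (v + C) / \<delta>"
  have q: "0 \<le> q" "q \<le> N"
    using v \<delta>_pos N unfolding q_def by (simp, simp add: \<delta> field_simps)
  define m where "m = nat (\<lceil>q\<rceil> - 1)"
  have "{k\<in>{1..N}. real k < q} = {1..m}"
  proof safe
    fix k assume "k \<in> {1..N}" "real k < q"
    moreover from this have "int k < \<lceil>q\<rceil>" by (simp add: less_ceiling_iff)
    ultimately show "k \<in> {1..m}" unfolding m_def by auto
  next
    fix k assume k: "k \<in> {1..m}"
    then have "int k < \<lceil>q\<rceil>" unfolding m_def by auto
    then show "real k < q" by (simp add: less_ceiling_iff)
    have "\<lceil>q\<rceil> \<le> int N" using q by (simp add: ceiling_le_iff)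
    then show "k \<in> {1..N}" using k unfolding m_def by auto
  qed
  moreover have "(-C + real k * \<delta> < v) \<longleftrightarrow> real k < q" for k
    unfolding q_def using \<delta>_pos by (simp add: field_simps)
  ultimately have "(\<Sum>k\<in>{1..N}. if -C + real k * \<delta> < v then 1 else 0 :: real) = real m"
    by (simp add: sum.If_cases Int_def)
  moreover have "real m \<le> q" "q \<le> real m + 1"
    using q ceiling_correct[of q] unfolding m_def by linarith+
  moreover have "v - (-C + \<delta> * real m) = \<delta> * (q - real m)"
    unfolding q_def using \<delta>_pos by (simp add: field_simps)
  ultimately show ?thesis using \<delta>_pos by (simp add: abs_mult)
qed

lemma cont_test_fun_affine_sum:
  assumes "finite A" and h: "\<And>k. k \<in> A \<Longrightarrow> cont_test_fun J (h k)" and "c \<ge> 0"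
  shows "cont_test_fun J (\<lambda>y. a + c * (\<Sum>k\<in>A. h k y))"
  unfolding cont_test_fun_def test_fun_def
proof (intro conjI allI impI)
  have "\<forall>k\<in>A. \<exists>C. \<forall>x\<in>PiE J (\<lambda>_. UNIV). \<bar>h k x\<bar> \<le> C"
    using h unfolding cont_test_fun_def test_fun_def by blast
  then obtain C where C: "\<And>k x. k \<in> A \<Longrightarrow> x \<in> PiE J (\<lambda>_. UNIV) \<Longrightarrow> \<bar>h k x\<bar> \<le> C k"
    by metis
  have "\<bar>a + c * (\<Sum>k\<in>A. h k x)\<bar> \<le> \<bar>a\<bar> + c * (\<Sum>k\<in>A. C k)" if "x \<in> PiE J (\<lambda>_. UNIV)" for x
  proof -
    have "\<bar>a + c * (\<Sum>k\<in>A. h k x)\<bar> \<le> \<bar>a\<bar> + c * \<bar>\<Sum>k\<in>A. h k x\<bar>"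
      using abs_triangle_ineq[of a "c * (\<Sum>k\<in>A. h k x)"] \<open>c \<ge> 0\<close> by (simp add: abs_mult)
    also have "\<bar>\<Sum>k\<in>A. h k x\<bar> \<le> (\<Sum>k\<in>A. C k)"
      by (rule order_trans[OF sum_abs sum_mono]) (rule C[OF _ that])
    then have "c * \<bar>\<Sum>k\<in>A. h k x\<bar> \<le> c * (\<Sum>k\<in>A. C k)"
      using \<open>c \<ge> 0\<close> by (rule mult_left_mono)
    finally show ?thesis by simp
  qed
  then show "\<exists>B. \<forall>x\<in>PiE J (\<lambda>_. UNIV). \<bar>a + c * (\<Sum>k\<in>A. h k x)\<bar> \<le> B" by blast
  show "(\<lambda>y. a + c * (\<Sum>k\<in>A. h k y)) \<in> borel_measurable (PiM J (\<lambda>_. borel))"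
    using h unfolding cont_test_fun_def test_fun_def
    by (intro borel_measurable_add borel_measurable_times borel_measurable_const
        borel_measurable_sum) auto
  show "coord_mono J (\<lambda>y. a + c * (\<Sum>k\<in>A. h k y))"
    using h \<open>c \<ge> 0\<close> unfolding cont_test_fun_def test_fun_def coord_mono_def
    by (auto intro!: mult_left_mono sum_mono)
next
  fix xs :: "nat \<Rightarrow> _ \<Rightarrow> real" and x
  assume "\<forall>j\<in>J. (\<lambda>k. xs k j) \<longlonglongrightarrow> x j"
  with h show "(\<lambda>t. a + c * (\<Sum>k\<in>A. h k (restrict (xs t) J))) \<longlonglongrightarrow> a + c * (\<Sum>k\<in>A. h k (restrict x J))"
    unfolding cont_test_fun_def by (intro tendsto_intros) auto
qed

text \<open>A monotone test function is a staircase over its up-closed superlevel sets, and each of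
  these is approximated by a continuous monotone bump.\<close>

lemma test_fun_L1_approx:
  fixes \<mu> :: "(nat \<Rightarrow> real) measure"
  assumes prob: "prob_space \<mu>" and sets: "sets \<mu> = sets borel" and J: "finite J"
    and f: "test_fun J f" and bound: "\<And>x. \<bar>f (restrict x J)\<bar> \<le> C" and e: "\<epsilon> > 0"
  obtains h where "cont_test_fun J h" "\<And>x. \<bar>h (restrict x J)\<bar> \<le> C"
    "integral\<^sup>L \<mu> (\<lambda>x. \<bar>f (restrict x J) - h (restrict x J)\<bar>) \<le> \<epsilon>"
proof -
  interpret prob_space \<mu> by fact
  have C: "C \<ge> 0" using bound[of undefined] by linarith
  define N :: nat where "N = nat \<lceil>4 * C / \<epsilon>\<rceil> + 1"
  define \<delta> where "\<delta> = 2 * C / N"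
  define \<eta> where "\<eta> = \<epsilon> / (2 * (2 * C + 1))"
  have N: "N > 0" unfolding N_def by simp
  have \<delta>: "\<delta> \<ge> 0" unfolding \<delta>_def using C by simp
  have \<eta>: "\<eta> > 0" unfolding \<eta>_def using C e by simp
  have "4 * C / \<epsilon> < real N" unfolding N_def by linarith
  then have \<delta>_small: "\<delta> \<le> \<epsilon> / 2"
    unfolding \<delta>_def using e N by (simp add: field_simps)
  define F where "F x = f (restrict x J)" for x
  have F_meas: "F \<in> borel_measurable borel"
    unfolding F_def by (rule test_fun_borel_measurable[OF f])
  define S where "S k = {x. -C + real k * \<delta> < F x}" for k :: nat
  have S_borel: "S k \<in> sets borel" for k
    using F_meas unfolding S_def by measurable
  have S_up: "y \<in> S k" if "x \<in> S k" "\<And>j. j \<in> J \<Longrightarrow> x j \<le> y j" for x y k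
  proof -
    have "F x \<le> F y"
      using f that(2) unfolding F_def test_fun_def coord_mono_def by auto
    then show ?thesis using that(1) unfolding S_def by auto
  qed
  have "\<forall>k. \<exists>h. cont_test_fun J h \<and> (\<forall>x. 0 \<le> h (restrict x J) \<and> h (restrict x J) \<le> 1) \<and>
           integral\<^sup>L \<mu> (\<lambda>x. \<bar>indicator (S k) x - h (restrict x J)\<bar>) \<le> \<eta>"
  proof
    fix k
    show "\<exists>h. cont_test_fun J h \<and> (\<forall>x. 0 \<le> h (restrict x J) \<and> h (restrict x J) \<le> 1) \<and>
        integral\<^sup>L \<mu> (\<lambda>x. \<bar>indicator (S k) x - h (restrict x J)\<bar>) \<le> \<eta>"
      by (rule upset_indicator_approx[OF prob sets J S_borel S_up \<eta>]) blast+
  qed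
  from choice[OF this] obtain hs where "\<forall>k. cont_test_fun J (hs k) \<and>
      (\<forall>x. 0 \<le> hs k (restrict x J) \<and> hs k (restrict x J) \<le> 1) \<and>
      integral\<^sup>L \<mu> (\<lambda>x. \<bar>indicator (S k) x - hs k (restrict x J)\<bar>) \<le> \<eta>"
    by blast
  then have hs: "\<And>k. cont_test_fun J (hs k)"
    "\<And>k x. 0 \<le> hs k (restrict x J)" "\<And>k x. hs k (restrict x J) \<le> 1"
    "\<And>k. integral\<^sup>L \<mu> (\<lambda>x. \<bar>indicator (S k) x - hs k (restrict x J)\<bar>) \<le> \<eta>"
    by auto
  define H where "H y = -C + \<delta> * (\<Sum>k\<in>{1..N}. hs k y)" for y
  define err where "err k x = \<bar>indicator (S k) x - hs k (restrict x J)\<bar>" for k x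
  have H: "cont_test_fun J H"
    unfolding H_def by (rule cont_test_fun_affine_sum) (use hs(1) \<delta> in auto)
  have H_bound: "\<bar>H (restrict x J)\<bar> \<le> C" for x
  proof -
    have "0 \<le> (\<Sum>k\<in>{1..N}. hs k (restrict x J))" using hs(2) by (intro sum_nonneg) auto
    then have "0 \<le> \<delta> * (\<Sum>k\<in>{1..N}. hs k (restrict x J))" using \<delta> by simp
    moreover have "(\<Sum>k\<in>{1..N}. hs k (restrict x J)) \<le> N"
      using sum_mono[of "{1..N}" "\<lambda>k. hs k (restrict x J)" "\<lambda>_. 1"] hs(3) by simp
    then have "\<delta> * (\<Sum>k\<in>{1..N}. hs k (restrict x J)) \<le> \<delta> * N" using \<delta> by (rule mult_left_mono)
    moreover have "\<delta> * N = 2 * C" unfolding \<delta>_def using N by simp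
    ultimately show ?thesis unfolding H_def by linarith
  qed
  have pointwise: "\<bar>F x - H (restrict x J)\<bar> \<le> \<delta> + \<delta> * (\<Sum>k\<in>{1..N}. err k x)" for x
  proof -
    have "(\<Sum>k\<in>{1..N}. indicator (S k) x :: real) = (\<Sum>k\<in>{1..N}. if -C + real k * \<delta> < F x then 1 else 0)"
      unfolding S_def by (intro sum.cong refl) (simp add: indicator_def)
    then have "\<bar>F x - (-C + \<delta> * (\<Sum>k\<in>{1..N}. indicator (S k) x))\<bar> \<le> \<delta>"
      using staircase_approx[OF N _ _ \<delta>_def, of "F x"] bound[of x] unfolding F_def by simp
    moreover have "\<bar>\<delta> * (\<Sum>k\<in>{1..N}. indicator (S k) x - hs k (restrict x J))\<bar> \<le> \<delta> * (\<Sum>k\<in>{1..N}. err k x)"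
      unfolding err_def using \<delta> by (simp add: abs_mult mult_left_mono sum_abs)
    moreover have "F x - H (restrict x J) = (F x - (-C + \<delta> * (\<Sum>k\<in>{1..N}. indicator (S k) x)))
        + \<delta> * (\<Sum>k\<in>{1..N}. indicator (S k) x - hs k (restrict x J))"
      unfolding H_def by (simp add: sum_subtractf algebra_simps)
    ultimately show ?thesis
      using abs_triangle_ineq[of "F x - (-C + \<delta> * (\<Sum>k\<in>{1..N}. indicator (S k) x))"] by linarith
  qed
  have meas: "(\<lambda>x. hs k (restrict x J)) \<in> borel_measurable \<mu>" "F \<in> borel_measurable \<mu>"
    "(\<lambda>x. H (restrict x J)) \<in> borel_measurable \<mu>" for k
    using measurable_sets_borel_cong[OF sets] F_meas
      test_fun_borel_measurable[OF cont_test_fun_imp_test_fun[OF hs(1)]]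
      test_fun_borel_measurable[OF cont_test_fun_imp_test_fun[OF H]] by auto
  have err_int: "integrable \<mu> (err k)" for k
  proof (rule integrable_bounded[where B=1])
    show "err k \<in> borel_measurable \<mu>"
      unfolding err_def using S_borel sets
      by (intro borel_measurable_abs borel_measurable_diff borel_measurable_indicator meas(1)) auto
    show "\<bar>err k x\<bar> \<le> 1" for x
      using hs(2,3)[of k x] by (auto simp: err_def indicator_def)
  qed
  have "integral\<^sup>L \<mu> (\<lambda>x. \<bar>F x - H (restrict x J)\<bar>) \<le> integral\<^sup>L \<mu> (\<lambda>x. \<delta> + \<delta> * (\<Sum>k\<in>{1..N}. err k x))"
  proof (rule integral_mono[OF _ _ pointwise])
    have "\<bar>F x - H (restrict x J)\<bar> \<le> 2 * C" for x
      using bound[of x] H_bound[of x] unfolding F_def by linarith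
    then show "integrable \<mu> (\<lambda>x. \<bar>F x - H (restrict x J)\<bar>)"
      using meas by (intro integrable_bounded[where B="2 * C"]) auto
  qed (use err_int in auto)
  also have "\<dots> = \<delta> + \<delta> * (\<Sum>k\<in>{1..N}. integral\<^sup>L \<mu> (err k))"
    using err_int prob_space by simp
  also have "\<dots> \<le> \<delta> + \<delta> * (N * \<eta>)"
    using hs(4) \<delta> sum_mono[of "{1..N}" "\<lambda>k. integral\<^sup>L \<mu> (err k)" "\<lambda>_. \<eta>"]
    unfolding err_def by (intro add_left_mono mult_left_mono) auto
  also have "\<dots> = \<delta> + 2 * C * \<eta>" unfolding \<delta>_def using N by simp
  also have "\<dots> \<le> \<epsilon>"
  proof -
    have "2 * C * \<eta> \<le> \<epsilon> / 2" unfolding \<eta>_def using C e by (simp add: field_simps)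
    with \<delta>_small show ?thesis by linarith
  qed
  finally show ?thesis using that H H_bound unfolding F_def by blast
qed

lemma (in prob_space) abs_expectation_le:
  fixes f :: "'a \<Rightarrow> real"
  assumes "integrable M f" "\<And>x. \<bar>f x\<bar> \<le> B"
  shows "\<bar>expectation f\<bar> \<le> B"
proof -
  have "\<bar>expectation f\<bar> \<le> expectation (\<lambda>x. \<bar>f x\<bar>)" by (rule integral_abs_bound)
  also have "\<dots> \<le> B" using assms by (intro integral_le_const) auto
  finally show ?thesis .
qed

text \<open>Since \<open>FG - HL = F (G - L) + L (F - H)\<close>, the covariance moves by at most the
  \<open>L\<^sup>1\<close>-errors weighted by the bounds of \<open>F\<close> and \<open>L\<close>.\<close>

lemma (in prob_space) covariance_perturbation:
  fixes F G H L :: "'a \<Rightarrow> real"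
  assumes meas: "F \<in> borel_measurable M" "G \<in> borel_measurable M"
      "H \<in> borel_measurable M" "L \<in> borel_measurable M"
    and bounds: "\<And>x. \<bar>F x\<bar> \<le> a" "\<And>x. \<bar>G x\<bar> \<le> c" "\<And>x. \<bar>H x\<bar> \<le> a" "\<And>x. \<bar>L x\<bar> \<le> c"
  shows "\<bar>(expectation (\<lambda>x. F x * G x) - expectation F * expectation G)
          - (expectation (\<lambda>x. H x * L x) - expectation H * expectation L)\<bar>
    \<le> 2 * (a * expectation (\<lambda>x. \<bar>G x - L x\<bar>) + c * expectation (\<lambda>x. \<bar>F x - H x\<bar>))"
proof -
  have a: "a \<ge> 0" and c: "c \<ge> 0" using bounds(1,2) abs_ge_zero order_trans by metis+
  have prod_bound: "\<bar>F x * G x\<bar> \<le> a * c" "\<bar>H x * L x\<bar> \<le> a * c" for x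
    unfolding abs_mult using bounds a by (auto intro: mult_mono)
  have int: "integrable M F" "integrable M G" "integrable M H" "integrable M L"
    "integrable M (\<lambda>x. F x * G x)" "integrable M (\<lambda>x. H x * L x)"
    using integrable_bounded[OF meas(1) bounds(1)] integrable_bounded[OF meas(2) bounds(2)]
      integrable_bounded[OF meas(3) bounds(3)] integrable_bounded[OF meas(4) bounds(4)]
      integrable_bounded[OF borel_measurable_times[OF meas(1,2)] prod_bound(1)]
      integrable_bounded[OF borel_measurable_times[OF meas(3,4)] prod_bound(2)] by auto
  define eF where "eF = expectation (\<lambda>x. \<bar>F x - H x\<bar>)"
  define eG where "eG = expectation (\<lambda>x. \<bar>G x - L x\<bar>)"
  have int_err: "integrable M (\<lambda>x. \<bar>F x - H x\<bar>)" "integrable M (\<lambda>x. \<bar>G x - L x\<bar>)"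
    using int by auto
  have "\<bar>expectation (\<lambda>x. F x * G x) - expectation (\<lambda>x. H x * L x)\<bar>
      = \<bar>expectation (\<lambda>x. F x * G x - H x * L x)\<bar>"
    using int by simp
  also have "\<dots> \<le> expectation (\<lambda>x. \<bar>F x * G x - H x * L x\<bar>)"
    by (rule integral_abs_bound)
  also have "\<dots> \<le> expectation (\<lambda>x. a * \<bar>G x - L x\<bar> + c * \<bar>F x - H x\<bar>)"
  proof (rule integral_mono)
    fix x
    have "F x * G x - H x * L x = F x * (G x - L x) + L x * (F x - H x)"
      by (simp add: algebra_simps)
    then show "\<bar>F x * G x - H x * L x\<bar> \<le> a * \<bar>G x - L x\<bar> + c * \<bar>F x - H x\<bar>"
      using abs_triangle_ineq[of "F x * (G x - L x)" "L x * (F x - H x)"] bounds(1,4)[of x]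
        mult_right_mono[of "\<bar>F x\<bar>" a "\<bar>G x - L x\<bar>"] mult_right_mono[of "\<bar>L x\<bar>" c "\<bar>F x - H x\<bar>"]
      by (simp add: abs_mult)
  qed (use int int_err in auto)
  also have "\<dots> = a * eG + c * eF"
    unfolding eF_def eG_def using int_err by simp
  finally have products: "\<bar>expectation (\<lambda>x. F x * G x) - expectation (\<lambda>x. H x * L x)\<bar> \<le> a * eG + c * eF" .
  have "\<bar>expectation F - expectation H\<bar> = \<bar>expectation (\<lambda>x. F x - H x)\<bar>"
    "\<bar>expectation G - expectation L\<bar> = \<bar>expectation (\<lambda>x. G x - L x)\<bar>"
    using int by simp_all
  then have err: "\<bar>expectation F - expectation H\<bar> \<le> eF" "\<bar>expectation G - expectation L\<bar> \<le> eG"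
    unfolding eF_def eG_def by (metis integral_abs_bound)+
  have "\<bar>expectation F\<bar> \<le> a" "\<bar>expectation L\<bar> \<le> c"
    using int bounds by (auto intro: abs_expectation_le)
  then have "\<bar>expectation F * (expectation G - expectation L)\<bar> \<le> a * eG"
    "\<bar>expectation L * (expectation F - expectation H)\<bar> \<le> c * eF"
    unfolding abs_mult using err a c by (auto intro!: mult_mono)
  moreover have "expectation F * expectation G - expectation H * expectation L
      = expectation F * (expectation G - expectation L) + expectation L * (expectation F - expectation H)"
    by (simp add: algebra_simps)
  ultimately have "\<bar>expectation F * expectation G - expectation H * expectation L\<bar> \<le> a * eG + c * eF"
    using abs_triangle_ineq[of "expectation F * (expectation G - expectation L)"
        "expectation L * (expectation F - expectation H)"] by linarith
  with products show ?thesis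
    unfolding eF_def[symmetric] eG_def[symmetric] by (smt (verit))
qed

lemma cov_ineq_cont_imp_test_on_borel:
  fixes \<mu> :: "(nat \<Rightarrow> real) measure"
  assumes prob: "prob_space \<mu>" and sets: "sets \<mu> = sets borel"
    and J1: "finite J1" and J2: "finite J2"
    and cont: "\<And>h l. cont_test_fun J1 h \<Longrightarrow> cont_test_fun J2 l \<Longrightarrow>
      s * integral\<^sup>L \<mu> (\<lambda>x. h (restrict x J1) * l (restrict x J2))
      \<le> s * (integral\<^sup>L \<mu> (\<lambda>x. h (restrict x J1)) * integral\<^sup>L \<mu> (\<lambda>x. l (restrict x J2)))"
    and f: "test_fun J1 f" and g: "test_fun J2 g"
  shows "s * integral\<^sup>L \<mu> (\<lambda>x. f (restrict x J1) * g (restrict x J2))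
    \<le> s * (integral\<^sup>L \<mu> (\<lambda>x. f (restrict x J1)) * integral\<^sup>L \<mu> (\<lambda>x. g (restrict x J2)))"
proof -
  interpret prob_space \<mu> by fact
  obtain Cf where Cf: "\<And>x. \<bar>f (restrict x J1)\<bar> \<le> Cf" "Cf \<ge> 0" using test_fun_boundE[OF f] by blast
  obtain Cg where Cg: "\<And>x. \<bar>g (restrict x J2)\<bar> \<le> Cg" "Cg \<ge> 0" using test_fun_boundE[OF g] by blast
  define cov where "cov F G = expectation (\<lambda>x. F x * G x) - expectation F * expectation G"
    for F G :: "(nat \<Rightarrow> real) \<Rightarrow> real"
  define F where "F x = f (restrict x J1)" for x
  define G where "G x = g (restrict x J2)" for x
  have meas: "(\<lambda>x. u (restrict x J)) \<in> borel_measurable \<mu>" if "test_fun J u" for J u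
    using measurable_sets_borel_cong[OF sets test_fun_borel_measurable[OF that]] .
  have "s * cov F G \<le> \<epsilon>" if e: "\<epsilon> > 0" for \<epsilon>
  proof -
    define \<eta> where "\<eta> = \<epsilon> / (2 * (\<bar>s\<bar> + 1) * (Cf + Cg + 1))"
    have \<eta>: "\<eta> > 0" unfolding \<eta>_def using e Cf Cg by (simp add: add_pos_nonneg)
    obtain h where h: "cont_test_fun J1 h" "\<And>x. \<bar>h (restrict x J1)\<bar> \<le> Cf"
      "expectation (\<lambda>x. \<bar>F x - h (restrict x J1)\<bar>) \<le> \<eta>"
      using test_fun_L1_approx[OF prob sets J1 f Cf(1) \<eta>] unfolding F_def by blast
    obtain l where l: "cont_test_fun J2 l" "\<And>x. \<bar>l (restrict x J2)\<bar> \<le> Cg"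
      "expectation (\<lambda>x. \<bar>G x - l (restrict x J2)\<bar>) \<le> \<eta>"
      using test_fun_L1_approx[OF prob sets J2 g Cg(1) \<eta>] unfolding G_def by blast
    define H where "H x = h (restrict x J1)" for x
    define L where "L x = l (restrict x J2)" for x
    have perturb: "\<bar>cov F G - cov H L\<bar> \<le> 2 * (Cf * \<eta> + Cg * \<eta>)"
    proof -
      have "\<bar>cov F G - cov H L\<bar> \<le> 2 * (Cf * expectation (\<lambda>x. \<bar>G x - L x\<bar>)
          + Cg * expectation (\<lambda>x. \<bar>F x - H x\<bar>))"
        unfolding cov_def F_def G_def H_def L_def
        by (rule covariance_perturbation)
          (use f g h l Cf Cg in \<open>auto intro: meas cont_test_fun_imp_test_fun\<close>)
      also have "\<dots> \<le> 2 * (Cf * \<eta> + Cg * \<eta>)"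
        using h(3) l(3) Cf(2) Cg(2) unfolding H_def L_def by (intro mult_left_mono add_mono) auto
      finally show ?thesis .
    qed
    have "s * cov H L \<le> 0"
      using cont[OF h(1) l(1)] unfolding cov_def H_def L_def by (simp add: algebra_simps)
    then have "s * cov F G \<le> s * (cov F G - cov H L)" by (simp add: algebra_simps)
    also have "\<dots> \<le> \<bar>s\<bar> * \<bar>cov F G - cov H L\<bar>" by (simp add: abs_mult[symmetric])
    also have "\<dots> \<le> \<bar>s\<bar> * (2 * (Cf + Cg) * \<eta>)"
      using perturb by (intro mult_left_mono) (auto simp: algebra_simps)
    also have "\<dots> \<le> \<epsilon>"
    proof -
      have "\<bar>s\<bar> * (2 * (Cf + Cg) * \<eta>) = \<epsilon> * (2 * \<bar>s\<bar> * (Cf + Cg)) / (2 * (\<bar>s\<bar> + 1) * (Cf + Cg + 1))"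
        unfolding \<eta>_def by simp
      also have "\<dots> \<le> \<epsilon> * (2 * (\<bar>s\<bar> + 1) * (Cf + Cg + 1)) / (2 * (\<bar>s\<bar> + 1) * (Cf + Cg + 1))"
        using Cf(2) Cg(2) e by (intro divide_right_mono mult_left_mono mult_mono) auto
      also have "\<dots> = \<epsilon>" using Cf(2) Cg(2) by (simp add: add_pos_nonneg)
      finally show ?thesis .
    qed
    finally show ?thesis .
  qed
  then have "s * cov F G \<le> 0" by (rule field_le_epsilon[where y=0, simplified])
  then show ?thesis unfolding cov_def F_def G_def by (simp add: algebra_simps)
qed

text \<open>The inequality only depends on the joint law of the finitely many \<open>Y\<^sub>i\<close> involved, a
  probability measure on \<open>\<real>\<^sup>\<nat>\<close> obtained by padding with zeros.\<close>

lemma cov_ineq_cont_imp_test: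
  fixes Y :: "nat \<Rightarrow> 'w \<Rightarrow> real"
  assumes P: "prob_space P" and J1: "finite J1" and J2: "finite J2"
    and Y: "\<And>i. i \<in> J1 \<union> J2 \<Longrightarrow> Y i \<in> borel_measurable P"
    and ineq: "cov_ineq P Y J1 J2 s cont_test_fun"
  shows "cov_ineq P Y J1 J2 s test_fun"
  unfolding cov_ineq_def
proof (intro allI impI)
  fix f g assume f: "test_fun J1 f" and g: "test_fun J2 g"
  define X where "X \<omega> = (\<lambda>i. if i \<in> J1 \<union> J2 then Y i \<omega> else 0)" for \<omega>
  have "(\<lambda>\<omega>. \<lambda>i\<in>UNIV. if i \<in> J1 \<union> J2 then Y i \<omega> else 0) \<in> measurable P (PiM UNIV (\<lambda>_. borel))"
  proof (intro measurable_restrict)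
    fix i show "(\<lambda>\<omega>. if i \<in> J1 \<union> J2 then Y i \<omega> else 0) \<in> borel_measurable P"
      using Y by (cases "i \<in> J1 \<union> J2") auto
  qed
  then have X: "X \<in> measurable P borel"
    unfolding X_def by (simp add: measurable_cong_sets[OF refl sets_PiM_equal_borel] restrict_UNIV)
  define \<mu> where "\<mu> = distr P borel X"
  have restrict_X: "restrict (\<lambda>i. Y i \<omega>) J = restrict (X \<omega>) J" if "J \<subseteq> J1 \<union> J2" for J \<omega>
    using that unfolding X_def by (intro restrict_ext) auto
  have transfer: "integral\<^sup>L P (\<lambda>\<omega>. u (restrict (\<lambda>i. Y i \<omega>) J) * v (restrict (\<lambda>i. Y i \<omega>) K))
      = integral\<^sup>L \<mu> (\<lambda>x. u (restrict x J) * v (restrict x K))"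
    "integral\<^sup>L P (\<lambda>\<omega>. u (restrict (\<lambda>i. Y i \<omega>) J)) = integral\<^sup>L \<mu> (\<lambda>x. u (restrict x J))"
    if "test_fun J u" "test_fun K v" "J \<subseteq> J1 \<union> J2" "K \<subseteq> J1 \<union> J2" for u v J K
    using integral_distr[OF X, of "\<lambda>x. u (restrict x J) * v (restrict x K)"]
      integral_distr[OF X, of "\<lambda>x. u (restrict x J)"]
      test_fun_borel_measurable[OF that(1)] test_fun_borel_measurable[OF that(2)]
    unfolding \<mu>_def restrict_X[OF that(3)] restrict_X[OF that(4)] by auto
  have "s * integral\<^sup>L \<mu> (\<lambda>x. f (restrict x J1) * g (restrict x J2))
      \<le> s * (integral\<^sup>L \<mu> (\<lambda>x. f (restrict x J1)) * integral\<^sup>L \<mu> (\<lambda>x. g (restrict x J2)))"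
  proof (rule cov_ineq_cont_imp_test_on_borel[OF _ _ J1 J2 _ f g])
    show "prob_space \<mu>" unfolding \<mu>_def by (rule prob_space.prob_space_distr[OF P X])
    show "sets \<mu> = sets borel" unfolding \<mu>_def by simp
    fix h l assume hl: "cont_test_fun J1 h" "cont_test_fun J2 l"
    then have "test_fun J1 h" "test_fun J2 l" by (auto dest: cont_test_fun_imp_test_fun)
    moreover have "s * integral\<^sup>L P (\<lambda>\<omega>. h (restrict (\<lambda>i. Y i \<omega>) J1) * l (restrict (\<lambda>i. Y i \<omega>) J2))
      \<le> s * (integral\<^sup>L P (\<lambda>\<omega>. h (restrict (\<lambda>i. Y i \<omega>) J1)) *
             integral\<^sup>L P (\<lambda>\<omega>. l (restrict (\<lambda>i. Y i \<omega>) J2)))"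
      using ineq hl unfolding cov_ineq_def by blast
    ultimately show "s * integral\<^sup>L \<mu> (\<lambda>x. h (restrict x J1) * l (restrict x J2))
      \<le> s * (integral\<^sup>L \<mu> (\<lambda>x. h (restrict x J1)) * integral\<^sup>L \<mu> (\<lambda>x. l (restrict x J2)))"
      using transfer[of J1 h J2 l] transfer[of J2 l J1 h] by simp
  qed
  then show "s * integral\<^sup>L P (\<lambda>\<omega>. f (restrict (\<lambda>i. Y i \<omega>) J1) * g (restrict (\<lambda>i. Y i \<omega>) J2))
      \<le> s * (integral\<^sup>L P (\<lambda>\<omega>. f (restrict (\<lambda>i. Y i \<omega>) J1)) *
             integral\<^sup>L P (\<lambda>\<omega>. g (restrict (\<lambda>i. Y i \<omega>) J2)))"
    using transfer[OF f g] transfer[OF g f] by auto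
qed

lemma assoc_ineq_cont_imp_test:
  fixes Y :: "nat \<Rightarrow> 'w \<Rightarrow> real"
  assumes "prob_space P" and "\<And>i. i < n \<Longrightarrow> Y i \<in> borel_measurable P"
    and ineq: "assoc_ineq P Y n cont_test_fun b"
  shows "assoc_ineq P Y n test_fun b"
  unfolding assoc_ineq_def
proof (intro allI impI)
  fix J assume J: "J \<subseteq> {..<n}"
  then show "cov_ineq P Y J (if b then {..<n} - J else J) (if b then 1 else -1) test_fun"
    using assms ineq finite_subset[OF J]
    by (intro cov_ineq_cont_imp_test) (auto simp: assoc_ineq_def split: if_splits)
qed

section \<open>Sums over groups of an associated vector\<close>

definition regroup :: "(nat \<Rightarrow> nat) \<Rightarrow> nat \<Rightarrow> nat set \<Rightarrow> ((nat \<Rightarrow> real) \<Rightarrow> real)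
    \<Rightarrow> (nat \<Rightarrow> real) \<Rightarrow> real" where
  "regroup grp m K f = (\<lambda>z. f (\<lambda>i\<in>K. \<Sum>p | p < m \<and> grp p = i. z p))"

lemma test_fun_regroup:
  assumes f: "test_fun K f"
  shows "test_fun {p. p < m \<and> grp p \<in> K} (regroup grp m K f)"
  unfolding test_fun_def
proof (intro conjI)
  let ?K' = "{p. p < m \<and> grp p \<in> K}"
  have sums: "(\<lambda>z::nat \<Rightarrow> real. \<lambda>i\<in>K. \<Sum>p | p < m \<and> grp p = i. z p)
      \<in> measurable (PiM ?K' (\<lambda>_. borel)) (PiM K (\<lambda>_. borel))"
    by (rule measurable_restrict, rule borel_measurable_sum, rule measurable_component_singleton) auto
  show "regroup grp m K f \<in> borel_measurable (PiM ?K' (\<lambda>_. borel))"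
    unfolding regroup_def using f unfolding test_fun_def by (intro measurable_compose[OF sums]) auto
  from f obtain C where "\<forall>x\<in>PiE K (\<lambda>_. UNIV). \<bar>f x\<bar> \<le> C" unfolding test_fun_def by blast
  then show "\<exists>C. \<forall>x\<in>PiE ?K' (\<lambda>_. UNIV). \<bar>regroup grp m K f x\<bar> \<le> C"
    unfolding regroup_def by (intro exI[of _ C]) auto
  show "coord_mono ?K' (regroup grp m K f)"
    unfolding coord_mono_def regroup_def
  proof (intro ballI impI)
    fix x y :: "nat \<Rightarrow> real" assume "\<forall>j\<in>?K'. x j \<le> y j"
    then have "(\<Sum>p | p < m \<and> grp p = i. x p) \<le> (\<Sum>p | p < m \<and> grp p = i. y p)" if "i \<in> K" for i
      using that by (auto intro!: sum_mono)
    then show "f (\<lambda>i\<in>K. \<Sum>p | p < m \<and> grp p = i. x p) \<le> f (\<lambda>i\<in>K. \<Sum>p | p < m \<and> grp p = i. y p)"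
      using f unfolding test_fun_def coord_mono_def by auto
  qed
qed

lemma regroup_restrict:
  assumes "\<And>i. i \<in> K \<Longrightarrow> Y i = (\<Sum>p | p < m \<and> grp p = i. Z p)"
  shows "regroup grp m K f (restrict Z {p. p < m \<and> grp p \<in> K}) = f (restrict Y K)"
  unfolding regroup_def using assms by (intro arg_cong[where f=f] restrict_ext) auto

lemma cov_ineq_regroup:
  fixes Z Y :: "nat \<Rightarrow> 'w \<Rightarrow> real"
  assumes sums: "\<And>\<omega> i. \<omega> \<in> space P \<Longrightarrow> i \<in> K1 \<union> K2 \<Longrightarrow> Y i \<omega> = (\<Sum>p | p < m \<and> grp p = i. Z p \<omega>)"
    and ineq: "cov_ineq P Z {p. p < m \<and> grp p \<in> K1} {p. p < m \<and> grp p \<in> K2} s test_fun"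
  shows "cov_ineq P Y K1 K2 s test_fun"
  unfolding cov_ineq_def
proof (intro allI impI)
  fix f g assume f: "test_fun K1 f" and g: "test_fun K2 g"
  have eval: "regroup grp m K1 f (restrict (\<lambda>p. Z p \<omega>) {p. p < m \<and> grp p \<in> K1}) = f (restrict (\<lambda>i. Y i \<omega>) K1)"
    "regroup grp m K2 g (restrict (\<lambda>p. Z p \<omega>) {p. p < m \<and> grp p \<in> K2}) = g (restrict (\<lambda>i. Y i \<omega>) K2)"
    if "\<omega> \<in> space P" for \<omega>
    using sums[OF that] by (auto intro: regroup_restrict)
  let ?F = "\<lambda>\<omega>. regroup grp m K1 f (restrict (\<lambda>p. Z p \<omega>) {p. p < m \<and> grp p \<in> K1})"
  let ?G = "\<lambda>\<omega>. regroup grp m K2 g (restrict (\<lambda>p. Z p \<omega>) {p. p < m \<and> grp p \<in> K2})"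
  have "s * integral\<^sup>L P (\<lambda>\<omega>. ?F \<omega> * ?G \<omega>) \<le> s * (integral\<^sup>L P ?F * integral\<^sup>L P ?G)"
    using ineq test_fun_regroup[OF f] test_fun_regroup[OF g] unfolding cov_ineq_def by blast
  moreover have "integral\<^sup>L P (\<lambda>\<omega>. ?F \<omega> * ?G \<omega>)
      = integral\<^sup>L P (\<lambda>\<omega>. f (restrict (\<lambda>i. Y i \<omega>) K1) * g (restrict (\<lambda>i. Y i \<omega>) K2))"
    "integral\<^sup>L P ?F = integral\<^sup>L P (\<lambda>\<omega>. f (restrict (\<lambda>i. Y i \<omega>) K1))"
    "integral\<^sup>L P ?G = integral\<^sup>L P (\<lambda>\<omega>. g (restrict (\<lambda>i. Y i \<omega>) K2))"
    using eval by (auto intro: Bochner_Integration.integral_cong)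
  ultimately show "s * integral\<^sup>L P (\<lambda>\<omega>. f (restrict (\<lambda>i. Y i \<omega>) K1) * g (restrict (\<lambda>i. Y i \<omega>) K2))
     \<le> s * (integral\<^sup>L P (\<lambda>\<omega>. f (restrict (\<lambda>i. Y i \<omega>) K1)) * integral\<^sup>L P (\<lambda>\<omega>. g (restrict (\<lambda>i. Y i \<omega>) K2)))"
    by simp
qed

text \<open>Monotone functions of the group sums are monotone functions of the summands.\<close>

lemma assoc_ineq_group_sums:
  fixes Z Y :: "nat \<Rightarrow> 'w \<Rightarrow> real" and grp :: "nat \<Rightarrow> nat"
  assumes grp: "\<And>p. p < m \<Longrightarrow> grp p < n"
    and sums: "\<And>\<omega> i. \<omega> \<in> space P \<Longrightarrow> i < n \<Longrightarrow> Y i \<omega> = (\<Sum>p | p < m \<and> grp p = i. Z p \<omega>)"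
    and ineq: "assoc_ineq P Z m test_fun b"
  shows "assoc_ineq P Y n test_fun b"
  unfolding assoc_ineq_def
proof (intro allI impI)
  fix J assume J: "J \<subseteq> {..<n}"
  let ?J' = "{p. p < m \<and> grp p \<in> J}"
  have "?J' \<subseteq> {..<m}" by auto
  then have "cov_ineq P Z ?J' (if b then {..<m} - ?J' else ?J') (if b then 1 else -1) test_fun"
    using ineq unfolding assoc_ineq_def by blast
  moreover have "{p. p < m \<and> grp p \<in> (if b then {..<n} - J else J)} = (if b then {..<m} - ?J' else ?J')"
    using grp by auto
  ultimately have "cov_ineq P Z ?J' {p. p < m \<and> grp p \<in> (if b then {..<n} - J else J)}
      (if b then 1 else -1) test_fun"
    by simp
  then show "cov_ineq P Y J (if b then {..<n} - J else J) (if b then 1 else -1) test_fun"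
    by (rule cov_ineq_regroup[rotated]) (use sums J in \<open>auto split: if_splits\<close>)
qed

section \<open>Monotone limits of sets\<close>

definition mono_limit :: "(nat \<Rightarrow> 'a set) \<Rightarrow> 'a set \<Rightarrow> bool" where
  "mono_limit A L \<longleftrightarrow> (incseq A \<and> L = (\<Union>m. A m)) \<or> (decseq A \<and> L = (\<Inter>m. A m))"

lemma mono_limit_Diff_right: "mono_limit A L \<Longrightarrow> mono_limit (\<lambda>m. A m - U) (L - U)"
  unfolding mono_limit_def incseq_def decseq_def by blast

lemma mono_limit_Diff_left: "mono_limit A L \<Longrightarrow> mono_limit (\<lambda>m. S - A m) (S - L)"
  unfolding mono_limit_def incseq_def decseq_def by blast

lemma mono_limit_subset: "mono_limit A L \<Longrightarrow> (\<And>m. A m \<subseteq> E) \<Longrightarrow> L \<subseteq> E"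
  unfolding mono_limit_def by blast

lemma mono_limit_sets: "mono_limit A L \<Longrightarrow> (\<And>m. A m \<in> sets M) \<Longrightarrow> L \<in> sets M"
  unfolding mono_limit_def by auto

lemma tendsto_measure_mono_limit:
  assumes lim: "mono_limit A L" and A: "\<And>m. A m \<in> sets \<mu>" "\<And>m. A m \<subseteq> S"
    and S: "S \<in> sets \<mu>" "emeasure \<mu> S \<noteq> \<infinity>"
  shows "(\<lambda>m. measure \<mu> (A m)) \<longlonglongrightarrow> measure \<mu> L"
proof -
  have finite: "emeasure \<mu> B \<noteq> \<infinity>" if "B \<in> sets \<mu>" "B \<subseteq> S" for B
    using emeasure_mono[OF that(2) S(1)] S(2) by (auto simp: top_unique)
  from lim show ?thesis
    unfolding mono_limit_def
  proof (elim disjE conjE)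
    assume "incseq A" "L = (\<Union>m. A m)"
    moreover have "emeasure \<mu> (\<Union>m. A m) \<noteq> \<infinity>" using A by (intro finite) auto
    ultimately show ?thesis using A by (auto intro!: Lim_measure_incseq)
  next
    assume "decseq A" "L = (\<Inter>m. A m)"
    moreover have "emeasure \<mu> (A m) \<noteq> \<infinity>" for m using A by (intro finite)
    ultimately show ?thesis using A by (auto intro!: Lim_measure_decseq)
  qed
qed

text \<open>The monotone class theorem, applied on the trace of the generated ring on \<open>E\<close>.\<close>

lemma generated_ring_monotone_class:
  assumes semi: "semiring_of_sets UNIV \<I>" and E: "E \<in> semiring_of_sets.generated_ring \<I>"
    and ring: "\<And>A. A \<in> semiring_of_sets.generated_ring \<I> \<Longrightarrow> A \<subseteq> E \<Longrightarrow> A \<in> C"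
    and lim: "\<And>A L. (\<And>m. A m \<in> C) \<Longrightarrow> mono_limit A L \<Longrightarrow> L \<in> C"
    and B: "B \<in> sigma_sets UNIV \<I>" "B \<subseteq> E"
  shows "B \<in> C"
proof -
  interpret semiring_of_sets UNIV \<I> by fact
  interpret R: ring_of_sets UNIV generated_ring by (rule generating_ring)
  have "algebra E ((\<inter>) E ` generated_ring)"
    unfolding algebra_iff_Un
  proof (intro conjI ballI)
    show "(\<inter>) E ` generated_ring \<subseteq> Pow E" "{} \<in> (\<inter>) E ` generated_ring"
      by (auto intro!: image_eqI[of _ _ "{}"])
    fix a c assume "a \<in> (\<inter>) E ` generated_ring" "c \<in> (\<inter>) E ` generated_ring"
    then obtain r t where r: "r \<in> generated_ring" "a = E \<inter> r" and t: "t \<in> generated_ring" "c = E \<inter> t"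
      by auto
    have "E - a = E \<inter> (E - r)" "a \<union> c = E \<inter> (r \<union> t)" using r t by auto
    then show "E - a \<in> (\<inter>) E ` generated_ring" "a \<union> c \<in> (\<inter>) E ` generated_ring"
      using r t E by (auto intro!: R.Diff R.Un)
  qed
  then have "sigma_sets E ((\<inter>) E ` generated_ring) \<subseteq> C"
  proof (rule algebra.monotone_class)
    show "(\<inter>) E ` generated_ring \<subseteq> C" using E by (auto intro!: ring R.Int)
  next
    fix A :: "nat \<Rightarrow> _" assume A: "\<And>n. A n \<in> C" "\<And>n. A n \<subseteq> A (Suc n)"
    then have "mono_limit A (\<Union>n. A n)" unfolding mono_limit_def using incseq_SucI by blast
    with A(1) show "(\<Union>n. A n) \<in> C" by (rule lim)
  next
    fix A :: "nat \<Rightarrow> _" assume A: "\<And>n. A n \<in> C" "\<And>n. A (Suc n) \<subseteq> A n"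
    then have "mono_limit A (\<Inter>n. A n)" unfolding mono_limit_def using decseq_SucI by blast
    with A(1) show "(\<Inter>n. A n) \<in> C" by (rule lim)
  qed
  moreover have "(\<inter>) E ` sigma_sets UNIV generated_ring = sigma_sets E ((\<inter>) E ` generated_ring)"
    using E by (intro sigma_sets_Int) auto
  moreover have "B = E \<inter> B" using B(2) by auto
  ultimately show ?thesis
    using B(1) sigma_sets_generated_ring_eq by (metis image_eqI subsetD)
qed

section \<open>Random measures on disjoint sets\<close>

lemma random_measure_sets: "random_measure P M \<Longrightarrow> \<omega> \<in> space P \<Longrightarrow> sets (M \<omega>) = sets borel"
  unfolding random_measure_def by blast

lemma random_measure_finite:
  "random_measure P M \<Longrightarrow> \<omega> \<in> space P \<Longrightarrow> B \<in> sets borel \<Longrightarrow> bounded B \<Longrightarrow> emeasure (M \<omega>) B \<noteq> \<infinity>"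
  unfolding random_measure_def by (metis less_irrefl)

lemma random_measure_measurable:
  assumes "random_measure P M" "B \<in> sets borel"
  shows "(\<lambda>\<omega>. measure (M \<omega>) B) \<in> borel_measurable P"
proof -
  have "(\<lambda>\<omega>. emeasure (M \<omega>) B) \<in> borel_measurable P"
    using assms unfolding random_measure_def by blast
  then show ?thesis unfolding measure_def by measurable
qed

lemma generated_ring_borel_bounded:
  fixes \<I> :: "'a::metric_space set set"
  assumes "semiring_of_sets \<Omega> \<I>" "\<I> \<subseteq> sets borel" "\<forall>B\<in>\<I>. bounded B"
    and "A \<in> semiring_of_sets.generated_ring \<I>"
  shows "A \<in> sets borel" "bounded A"
proof -
  interpret semiring_of_sets \<Omega> \<I> by fact
  from assms(4) obtain C where "finite C" "C \<subseteq> \<I>" "A = \<Union>C" by (rule generated_ringE)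
  with assms(2,3) show "A \<in> sets borel" "bounded A" by (auto intro!: sets.finite_Union bounded_Union)
qed

lemma sum_over_Sigma_enumeration:
  assumes h: "bij_betw h {..<m} (Sigma I C)" and i: "i \<in> I"
  shows "(\<Sum>c\<in>C i. \<phi> c) = (\<Sum>p | p < m \<and> fst (h p) = i. \<phi> (snd (h p)))"
proof -
  have into: "h p \<in> Sigma I C" if "p < m" for p
    using h that by (auto simp: bij_betw_def)
  have onto: "\<exists>p<m. x = h p" if "x \<in> Sigma I C" for x
    using h that by (auto simp: bij_betw_def)
  have "bij_betw h {p. p < m \<and> fst (h p) = i} ({i} \<times> C i)"
    unfolding bij_betw_def
  proof
    show "inj_on h {p. p < m \<and> fst (h p) = i}"
      using h by (auto simp: bij_betw_def inj_on_def)
    show "h ` {p. p < m \<and> fst (h p) = i} = {i} \<times> C i"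
    proof
      show "h ` {p. p < m \<and> fst (h p) = i} \<subseteq> {i} \<times> C i"
        using into by (force simp: mem_Times_iff)
      show "{i} \<times> C i \<subseteq> h ` {p. p < m \<and> fst (h p) = i}"
      proof
        fix x assume x: "x \<in> {i} \<times> C i"
        with i obtain p where "p < m" "x = h p" using onto by blast
        with x show "x \<in> h ` {p. p < m \<and> fst (h p) = i}" by auto
      qed
    qed
  qed
  then have "(\<Sum>p | p < m \<and> fst (h p) = i. \<phi> (snd (h p))) = (\<Sum>x\<in>{i} \<times> C i. \<phi> (snd x))"
    by (rule sum.reindex_bij_betw)
  also have "\<dots> = (\<Sum>c\<in>C i. \<phi> c)"
  proof -
    have "{i} \<times> C i = (\<lambda>c. (i, c)) ` C i" by auto
    moreover have "inj_on (\<lambda>c. (i, c)) (C i)" by (auto simp: inj_on_def)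
    ultimately show ?thesis by (simp add: sum.reindex)
  qed
  finally show ?thesis ..
qed

lemma assoc_ineq_generated_ring:
  fixes M :: "'w \<Rightarrow> 'a::metric_space measure"
  assumes rm: "random_measure P M" and semi: "semiring_of_sets UNIV \<I>"
    and \<I>: "\<I> \<subseteq> sets borel" "\<forall>B\<in>\<I>. bounded B"
    and basic: "\<And>n B. n \<ge> 1 \<Longrightarrow> (\<forall>i<n. B i \<in> \<I>) \<Longrightarrow> disjoint_family_on B {..<n} \<Longrightarrow>
      assoc_ineq P (\<lambda>i \<omega>. measure (M \<omega>) (B i)) n test_fun b"
    and n: "n \<ge> 1" and D: "\<And>i. i < n \<Longrightarrow> D i \<in> semiring_of_sets.generated_ring \<I>"
    and disj: "disjoint_family_on D {..<n}"
  shows "assoc_ineq P (\<lambda>i \<omega>. measure (M \<omega>) (D i)) n test_fun b"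
proof -
  interpret semiring_of_sets UNIV \<I> by fact
  have "\<forall>i\<in>{..<n}. \<exists>C. finite C \<and> disjoint C \<and> C \<subseteq> \<I> \<and> D i = \<Union>C"
  proof
    fix i assume "i \<in> {..<n}"
    then have "D i \<in> generated_ring" using D by auto
    then obtain C where "finite C" "disjoint C" "C \<subseteq> \<I>" "D i = \<Union>C" by (rule generated_ringE)
    then show "\<exists>C. finite C \<and> disjoint C \<and> C \<subseteq> \<I> \<and> D i = \<Union>C" by blast
  qed
  then obtain C0 where C0: "\<And>i. i < n \<Longrightarrow> finite (C0 i) \<and> disjoint (C0 i) \<and> C0 i \<subseteq> \<I> \<and> D i = \<Union>(C0 i)"
    by (metis lessThan_iff bchoice)
  txt \<open>The empty piece guarantees at least one piece, as \<open>basic\<close> needs \<open>m \<ge> 1\<close>.\<close>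
  define C where "C i = insert {} (C0 i)" for i
  have C: "finite (C i)" "disjoint (C i)" "C i \<subseteq> \<I>" "D i = \<Union>(C i)" if "i < n" for i
    using C0[OF that] empty_sets unfolding C_def by (auto simp: disjoint_def)
  obtain h where h: "bij_betw h {0..<card (Sigma {..<n} C)} (Sigma {..<n} C)"
    using ex_bij_betw_nat_finite C(1) by blast
  define m where "m = card (Sigma {..<n} C)"
  have h: "bij_betw h {..<m} (Sigma {..<n} C)" using h by (simp add: m_def atLeast0LessThan)
  define grp where "grp p = fst (h p)" for p
  define piece where "piece p = snd (h p)" for p
  have h_in: "grp p < n" "piece p \<in> C (grp p)" if "p < m" for p
  proof -
    have "h p \<in> Sigma {..<n} C" using h that by (auto simp: bij_betw_def)
    then show "grp p < n" "piece p \<in> C (grp p)" unfolding grp_def piece_def by (auto simp: mem_Times_iff)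
  qed
  have "(0, {}) \<in> Sigma {..<n} C" using n by (auto simp: C_def)
  moreover have "finite (Sigma {..<n} C)" using C(1) by auto
  ultimately have m: "m \<ge> 1" unfolding m_def by (metis One_nat_def Suc_leI card_gt_0_iff empty_iff)
  have disj_pieces: "disjoint_family_on piece {..<m}"
    unfolding disjoint_family_on_def
  proof (intro ballI impI)
    fix p q assume pq: "p \<in> {..<m}" "q \<in> {..<m}" "p \<noteq> q"
    then have "h p \<noteq> h q" using h by (auto simp: bij_betw_def inj_on_def)
    show "piece p \<inter> piece q = {}"
    proof (cases "grp p = grp q")
      case True
      then have "piece p \<noteq> piece q" using \<open>h p \<noteq> h q\<close> unfolding grp_def piece_def by (simp add: prod_eq_iff)
      with True pq h_in C(2) show ?thesis unfolding disjoint_def by (metis lessThan_iff)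
    next
      case False
      then have "D (grp p) \<inter> D (grp q) = {}" using disj h_in pq unfolding disjoint_family_on_def by auto
      moreover have "piece p \<subseteq> D (grp p)" "piece q \<subseteq> D (grp q)"
        using pq C(4)[OF h_in(1)[of p]] C(4)[OF h_in(1)[of q]] h_in(2)[of p] h_in(2)[of q] by auto
      ultimately show ?thesis by blast
    qed
  qed
  have "assoc_ineq P (\<lambda>p \<omega>. measure (M \<omega>) (piece p)) m test_fun b"
    using h_in C(3) disj_pieces by (intro basic[OF m]) auto
  then show ?thesis
  proof (rule assoc_ineq_group_sums[rotated 2])
    fix \<omega> i assume \<omega>: "\<omega> \<in> space P" and i: "i < n"
    have finite: "emeasure (M \<omega>) c \<noteq> \<infinity>" if "c \<in> C i" for c
      using that C(3)[OF i] \<I> by (intro random_measure_finite[OF rm \<omega>]) auto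
    have "measure (M \<omega>) (D i) = measure (M \<omega>) (\<Union>c\<in>C i. c)" using C(4)[OF i] by simp
    also have "\<dots> = (\<Sum>c\<in>C i. measure (M \<omega>) c)"
      using C[OF i] \<I> random_measure_sets[OF rm \<omega>] finite
      by (intro measure_finite_Union) (auto simp: disjoint_def disjoint_family_on_def)
    also have "\<dots> = (\<Sum>p | p < m \<and> grp p = i. measure (M \<omega>) (piece p))"
      unfolding grp_def piece_def using h i by (intro sum_over_Sigma_enumeration) auto
    finally show "measure (M \<omega>) (D i) = (\<Sum>p | p < m \<and> grp p = i. measure (M \<omega>) (piece p))" .
  qed (use h_in in auto)
qed

text \<open>The family of the induction step: the slots before \<open>k\<close> are fixed, slot \<open>k\<close> is free,
  and the later slots are cut down to stay disjoint from it.\<close>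

definition splice_sets :: "nat \<Rightarrow> (nat \<Rightarrow> 'a set) \<Rightarrow> 'a set \<Rightarrow> 'a set \<Rightarrow> nat \<Rightarrow> 'a set" where
  "splice_sets k D U B i = (if i < k then D i else if i = k then B - U else D i - (U \<union> B))"

lemma mono_limit_splice_sets:
  "mono_limit A L \<Longrightarrow> mono_limit (\<lambda>m. splice_sets k D U (A m) i) (splice_sets k D U L i)"
proof -
  assume lim: "mono_limit A L"
  have "mono_limit (\<lambda>m. (D i - U) - A m) ((D i - U) - L)" by (rule mono_limit_Diff_left[OF lim])
  moreover have "(D i - U) - B = D i - (U \<union> B)" for B by auto
  ultimately show ?thesis
    using mono_limit_Diff_right[OF lim] unfolding splice_sets_def by (auto simp: mono_limit_def)
qed

text \<open>The admissible sets form a monotone class: the masses converge along monotone sequences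
  of subsets of the bounded set \<open>E\<close>, and the inequalities pass to the limit.\<close>

lemma assoc_ineq_splice_borel:
  fixes M :: "'w \<Rightarrow> 'a::metric_space measure"
  assumes P: "prob_space P" and rm: "random_measure P M" and semi: "semiring_of_sets UNIV \<I>"
    and sig: "sigma_sets UNIV \<I> = sets borel"
    and E: "E \<in> semiring_of_sets.generated_ring \<I>" "bounded E" and U: "U \<in> sets borel"
    and D: "\<And>i. i < n \<Longrightarrow> D i \<in> sets borel \<and> bounded (D i)"
    and ring: "\<And>A. A \<in> semiring_of_sets.generated_ring \<I> \<Longrightarrow> A \<subseteq> E \<Longrightarrow>
      assoc_ineq P (\<lambda>i \<omega>. measure (M \<omega>) (splice_sets k D U A i)) n cont_test_fun b"
    and B: "B \<in> sets borel" "B \<subseteq> E"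
  shows "assoc_ineq P (\<lambda>i \<omega>. measure (M \<omega>) (splice_sets k D U B i)) n cont_test_fun b"
proof -
  interpret semiring_of_sets UNIV \<I> by fact
  have ring_borel: "A \<in> sets borel" if "A \<in> generated_ring" for A
    using sigma_sets.Basic[OF that, of UNIV] sigma_sets_generated_ring_eq sig by auto
  have E_borel: "E \<in> sets borel" using ring_borel[OF E(1)] .
  have splice_borel: "splice_sets k D U A i \<in> sets borel" if "A \<in> sets borel" "i < n" for A i
    using that D U unfolding splice_sets_def by auto
  have splice_bounded: "splice_sets k D U A i \<subseteq> (if i = k then E else D i)" if "A \<subseteq> E" for A i
    using that unfolding splice_sets_def by auto
  define Good where "Good = {A \<in> sets borel. A \<subseteq> E \<and>
    assoc_ineq P (\<lambda>i \<omega>. measure (M \<omega>) (splice_sets k D U A i)) n cont_test_fun b}"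
  have Good_lim: "L \<in> Good" if A: "\<And>m. A m \<in> Good" and lim: "mono_limit A L" for A L
  proof -
    have A': "A m \<in> sets borel" "A m \<subseteq> E" for m using A unfolding Good_def by auto
    then have L: "L \<in> sets borel" "L \<subseteq> E" using mono_limit_sets[OF lim] mono_limit_subset[OF lim] by auto
    have "assoc_ineq P (\<lambda>i \<omega>. measure (M \<omega>) (splice_sets k D U L i)) n cont_test_fun b"
    proof (rule assoc_ineq_limit[OF P, where Yk="\<lambda>m i \<omega>. measure (M \<omega>) (splice_sets k D U (A m) i)"])
      fix \<omega> i assume \<omega>: "\<omega> \<in> space P" and i: "i < n"
      let ?S = "if i = k then E else D i"
      have "?S \<in> sets (M \<omega>)" "emeasure (M \<omega>) ?S \<noteq> \<infinity>"
        using E E_borel D[OF i] random_measure_sets[OF rm \<omega>] random_measure_finite[OF rm \<omega>] by auto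
      moreover have "splice_sets k D U (A m) i \<in> sets (M \<omega>)" "splice_sets k D U (A m) i \<subseteq> ?S" for m
        using splice_borel[OF A'(1) i] splice_bounded[OF A'(2)] random_measure_sets[OF rm \<omega>] by auto
      ultimately show "(\<lambda>m. measure (M \<omega>) (splice_sets k D U (A m) i)) \<longlonglongrightarrow> measure (M \<omega>) (splice_sets k D U L i)"
        by (intro tendsto_measure_mono_limit[OF mono_limit_splice_sets[OF lim]]) auto
    qed (use A A' L random_measure_measurable[OF rm splice_borel] in \<open>auto simp: Good_def\<close>)
    with L show ?thesis unfolding Good_def by auto
  qed
  have "B \<in> Good"
  proof (rule generated_ring_monotone_class[OF semi E(1) _ Good_lim])
    show "A \<in> Good" if "A \<in> generated_ring" "A \<subseteq> E" for A
      using that ring ring_borel unfolding Good_def by blast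
  qed (use B sig in auto)
  then show ?thesis unfolding Good_def by blast
qed

text \<open>Induction on the number \<open>k\<close> of leading slots filled with arbitrary bounded Borel sets;
  the remaining slots stay in the generated ring and are cut down by the leading ones.\<close>

lemma assoc_ineq_borel_prefix:
  fixes M :: "'w \<Rightarrow> 'a::metric_space measure"
  assumes P: "prob_space P" and rm: "random_measure P M" and semi: "semiring_of_sets UNIV \<I>"
    and \<I>: "\<I> \<subseteq> sets borel" "\<forall>B\<in>\<I>. bounded B" and sig: "sigma_sets UNIV \<I> = sets borel"
    and diss: "dissecting \<I>"
    and basic: "\<And>n B. n \<ge> 1 \<Longrightarrow> (\<forall>i<n. B i \<in> \<I>) \<Longrightarrow> disjoint_family_on B {..<n} \<Longrightarrow>
      assoc_ineq P (\<lambda>i \<omega>. measure (M \<omega>) (B i)) n test_fun b"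
    and n: "n \<ge> 1"
  shows "k \<le> n \<Longrightarrow> (\<forall>i<k. D i \<in> sets borel \<and> bounded (D i)) \<Longrightarrow>
    (\<forall>i. k \<le> i \<and> i < n \<longrightarrow> D i \<in> semiring_of_sets.generated_ring \<I>) \<Longrightarrow>
    disjoint_family_on D {..<k} \<Longrightarrow> disjoint_family_on D {k..<n} \<Longrightarrow>
    assoc_ineq P (\<lambda>i \<omega>. measure (M \<omega>) (if i < k then D i else D i - (\<Union>j<k. D j))) n cont_test_fun b"
proof (induction k arbitrary: D)
  case 0
  have "assoc_ineq P (\<lambda>i \<omega>. measure (M \<omega>) (D i)) n test_fun b"
    by (rule assoc_ineq_generated_ring[OF rm semi \<I> basic n]) (use 0 in \<open>auto simp: atLeast0LessThan\<close>)
  then show ?case by (simp add: assoc_ineq_cont_test_fun)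
next
  case (Suc k)
  interpret semiring_of_sets UNIV \<I> by fact
  interpret R: ring_of_sets UNIV generated_ring by (rule generating_ring)
  have ring: "A \<in> sets borel" "bounded A" if "A \<in> generated_ring" for A
    using generated_ring_borel_bounded[OF semi \<I> that] by auto
  define U where "U = (\<Union>j<k. D j)"
  have k: "k < n" using Suc.prems(1) by simp
  have D_prefix: "D i \<in> sets borel" "bounded (D i)" if "i \<le> k" for i
    using Suc.prems(2) that by auto
  have D_ring: "D i \<in> generated_ring" if "Suc k \<le> i" "i < n" for i
    using Suc.prems(3) that by auto
  have U: "U \<in> sets borel" unfolding U_def using D_prefix by (intro sets.finite_UN) auto
  have "D k \<inter> D j = {}" if "j < k" for j
    using Suc.prems(4) that unfolding disjoint_family_on_def by (metis lessThan_iff less_SucI lessI less_irrefl)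
  then have DkU: "D k \<inter> U = {}" unfolding U_def by auto
  obtain C where C: "C \<subseteq> \<I>" "finite C" "D k \<subseteq> \<Union>C"
    using diss D_prefix[of k] unfolding dissecting_def by force
  define E where "E = \<Union>C"
  have "C \<subseteq> generated_ring" using C(1) generated_ringI_Basic by blast
  then have E: "E \<in> generated_ring" unfolding E_def using C(2) by (intro R.finite_Union)
  have "assoc_ineq P (\<lambda>i \<omega>. measure (M \<omega>) (splice_sets k D U (D k) i)) n cont_test_fun b"
  proof (rule assoc_ineq_splice_borel[OF P rm semi sig E ring(2)[OF E] U])
    show "D i \<in> sets borel \<and> bounded (D i)" if "i < n" for i
      using that D_prefix D_ring ring by (cases "i \<le> k") auto
    show "D k \<in> sets borel" "D k \<subseteq> E" using D_prefix C(3) unfolding E_def by auto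
    fix A assume A: "A \<in> generated_ring" "A \<subseteq> E"
    define D' where "D' i = (if i < k then D i else if i = k then A else D i - A)" for i
    have "assoc_ineq P (\<lambda>i \<omega>. measure (M \<omega>) (if i < k then D' i else D' i - (\<Union>j<k. D' j))) n cont_test_fun b"
    proof (rule Suc.IH)
      show "k \<le> n" "\<forall>i<k. D' i \<in> sets borel \<and> bounded (D' i)"
        using k D_prefix unfolding D'_def by auto
      show "\<forall>i. k \<le> i \<and> i < n \<longrightarrow> D' i \<in> generated_ring"
        using A D_ring unfolding D'_def by (auto intro!: R.Diff)
      show "disjoint_family_on D' {..<k}"
        using Suc.prems(4) unfolding D'_def disjoint_family_on_def by auto
      show "disjoint_family_on D' {k..<n}"
        unfolding disjoint_family_on_def
      proof (intro ballI impI)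
        fix i j assume ij: "i \<in> {k..<n}" "j \<in> {k..<n}" "i \<noteq> j"
        show "D' i \<inter> D' j = {}"
        proof (cases "i = k \<or> j = k")
          case True then show ?thesis using ij unfolding D'_def by auto
        next
          case False
          then have "D i \<inter> D j = {}" using Suc.prems(5) ij unfolding disjoint_family_on_def by auto
          then show ?thesis using False ij unfolding D'_def by auto
        qed
      qed
    qed
    moreover have "(if i < k then D' i else D' i - (\<Union>j<k. D' j)) = splice_sets k D U A i" for i
      unfolding D'_def U_def splice_sets_def by auto
    ultimately show "assoc_ineq P (\<lambda>i \<omega>. measure (M \<omega>) (splice_sets k D U A i)) n cont_test_fun b"
      by simp
  qed
  moreover have "splice_sets k D U (D k) i = (if i < Suc k then D i else D i - (\<Union>j<Suc k. D j))" for i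
  proof -
    have "(\<Union>j<Suc k. D j) = D k \<union> U" unfolding U_def by (auto simp: lessThan_Suc)
    then show ?thesis unfolding splice_sets_def using DkU less_Suc_eq[of i k] by auto
  qed
  ultimately show ?case by simp
qed

lemma assoc_ineq_bounded_borel:
  fixes M :: "'w \<Rightarrow> 'a::metric_space measure"
  assumes P: "prob_space P" and rm: "random_measure P M" and semi: "semiring_of_sets UNIV \<I>"
    and \<I>: "\<I> \<subseteq> sets borel" "\<forall>B\<in>\<I>. bounded B" and sig: "sigma_sets UNIV \<I> = sets borel"
    and diss: "dissecting \<I>"
    and basic: "\<And>n B. n \<ge> 1 \<Longrightarrow> (\<forall>i<n. B i \<in> \<I>) \<Longrightarrow> disjoint_family_on B {..<n} \<Longrightarrow>
      assoc_ineq P (\<lambda>i \<omega>. measure (M \<omega>) (B i)) n test_fun b"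
    and n: "n \<ge> 1" and B: "\<forall>i<n. B i \<in> sets borel \<and> bounded (B i)"
    and disj: "disjoint_family_on B {..<n}"
  shows "assoc_ineq P (\<lambda>i \<omega>. measure (M \<omega>) (B i)) n test_fun b"
proof -
  have "assoc_ineq P (\<lambda>i \<omega>. measure (M \<omega>) (if i < n then B i else B i - (\<Union>j<n. B j))) n cont_test_fun b"
    by (rule assoc_ineq_borel_prefix[OF P rm semi \<I> sig diss basic n])
      (use B disj in \<open>auto simp: disjoint_family_on_def\<close>)
  then have "assoc_ineq P (\<lambda>i \<omega>. measure (M \<omega>) (B i)) n cont_test_fun b"
    by (subst assoc_ineq_cong) auto
  then show ?thesis
    by (rule assoc_ineq_cont_imp_test[OF P, rotated]) (use B random_measure_measurable[OF rm] in auto)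
qed

theorem lemma4p5:
  fixes P :: "'w measure" and M :: "'w \<Rightarrow> 'a::polish_space measure"
    and \<I> :: "'a set set"
  assumes "prob_space P"
    and "random_measure P M"
    and "countable \<I>"
    and "semiring_of_sets UNIV \<I>"
    and "\<I> \<subseteq> sets borel"
    and "\<forall>B\<in>\<I>. bounded B"
    and "sigma_sets UNIV \<I> = sets borel"
    and "dissecting \<I>"
  shows "((\<forall>n::nat. \<forall>B::nat \<Rightarrow> 'a set. n \<ge> 1 \<longrightarrow> (\<forall>i<n. B i \<in> \<I>) \<longrightarrow>
              disjoint_family_on B {..<n} \<longrightarrow>
              neg_assoc P (\<lambda>i \<omega>. measure (M \<omega>) (B i)) {..<n})
          \<longleftrightarrow>
          (\<forall>n::nat. \<forall>B::nat \<Rightarrow> 'a set. n \<ge> 1 \<longrightarrow>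
              (\<forall>i<n. B i \<in> sets borel \<and> bounded (B i)) \<longrightarrow>
              disjoint_family_on B {..<n} \<longrightarrow>
              neg_assoc P (\<lambda>i \<omega>. measure (M \<omega>) (B i)) {..<n}))
       \<and>
         ((\<forall>n::nat. \<forall>B::nat \<Rightarrow> 'a set. n \<ge> 1 \<longrightarrow> (\<forall>i<n. B i \<in> \<I>) \<longrightarrow>
              disjoint_family_on B {..<n} \<longrightarrow>
              pos_assoc P (\<lambda>i \<omega>. measure (M \<omega>) (B i)) {..<n})
          \<longleftrightarrow>
          (\<forall>n::nat. \<forall>B::nat \<Rightarrow> 'a set. n \<ge> 1 \<longrightarrow>
              (\<forall>i<n. B i \<in> sets borel \<and> bounded (B i)) \<longrightarrow>
              disjoint_family_on B {..<n} \<longrightarrow>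
              pos_assoc P (\<lambda>i \<omega>. measure (M \<omega>) (B i)) {..<n}))"
proof -
  have "(\<forall>n B. n \<ge> 1 \<longrightarrow> (\<forall>i<n. B i \<in> \<I>) \<longrightarrow> disjoint_family_on B {..<n} \<longrightarrow>
          assoc_ineq P (\<lambda>i \<omega>. measure (M \<omega>) (B i)) n test_fun b)
    \<longleftrightarrow> (\<forall>n B. n \<ge> 1 \<longrightarrow> (\<forall>i<n. B i \<in> sets borel \<and> bounded (B i)) \<longrightarrow>
          disjoint_family_on B {..<n} \<longrightarrow> assoc_ineq P (\<lambda>i \<omega>. measure (M \<omega>) (B i)) n test_fun b)"
    for b
    using assoc_ineq_bounded_borel[OF assms(1,2,4,5,6,7,8)] assms(5,6) by blast
  then show ?thesis unfolding neg_assoc_iff_assoc_ineq pos_assoc_iff_assoc_ineq by blast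
qed

end
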